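(* Let $d\ge2$, $N\ge1$, and let $\Gamma$ be the graph obtained from the $d$-dimensional lattice $\mathbb L^d$ (vertex set $\mathbb Z^d$, edges $(m,m+a_s)$, $m\in\mathbb Z^d$, $s=1,\dots,d$, $a_s$ the standard basis) by inserting $N$ new vertices on every edge (subdividing each edge into a path of $N+1$ edges), with $\mathbb Z^d$ acting by translations. Then the fundamental graph $\Gamma_*$ has $\nu=dN+1$ vertices, and the spectrum of the normalized Laplacian $\Delta$ on $\Gamma$ is $\sigma(\Delta)=\sigma_{ac}(\Delta)\cup\sigma_{fb}(\Delta)$, where $\sigma_{ac}(\Delta)=[0,2]$ and the set of eigenvalues of infinite multiplicity is $$\sigma_{fb}(\Delta)=\Big\{1+\cos\frac{\pi n}{N+1}:\ n=1,\dots,N\Big\}.$$ Each of these degenerate bands has multiplicity $d-1$ and is embedded in the absolutely continuous spectrum.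
   Context: Normalized Laplacian on a graph with vertex set $V$: each undirected edge gives two oriented edges, $\mathcal A$ is the set of oriented edges, $\varkappa_v$ the number of oriented edges starting at $v$, and $(\Delta f)(v)=f(v)-\sum_{(v,u)\in\mathcal A}\frac{f(u)}{\sqrt{\varkappa_v\varkappa_u}}$ on $\ell^2(V)$. For a $\mathbb Z^d$-periodic graph with finite quotient $\Gamma_*=(V_*,\mathcal E_* )$, fix a set $V_0$ of representatives of the vertex orbits forming the vertex set of a subtree, write $v=v_0+[v]$, define edge indices $\tau(u,v)=[v]-[u]$ on $\mathcal A_*=\mathcal A/\mathbb Z^d$, and for $\vartheta\in\mathbb T^d=\mathbb R^d/(2\pi\mathbb Z)^d$ set $(\Delta(\vartheta)f)(v)=f(v)-\sum_{\mathbf e=(v,u)\in\mathcal A_*}\frac{e^{i\langle\tau(\mathbf e),\vartheta\rangle}}{\sqrt{\varkappa_v\varkappa_u}}f(u)$ on $\ell^2(V_* )$; $\Delta$ is unitarily equivalent to the direct integral of $\Delta(\vartheta)$, and $\sigma(\Delta)$ is the union of the bands $\lambda^0_n(\mathbb T^d)$ where $\lambda^0_n(\vartheta)$ are the ordered eigenvalues of $\Delta(\vartheta)$. A degenerate band $\{\lambda_*\}$ is an eigenvalue of $\Delta$ of infinite multiplicity; its multiplicity is the multiplicity of $\lambda_*$ as an eigenvalue of $\Delta(\vartheta)$ for a.e. $\vartheta$. $\sigma_{ac}(\Delta)$ denotes the absolutely continuous spectrum (union of nondegenerate bands), $\sigma_{fb}(\Delta)$ the set of eigenvalues of infinite multiplicity.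 *)

theory Defs
  imports "HOL-Analysis.Analysis"
begin

text \<open>Vertices of a Z^d-periodic graph are pairs (m, b): m in Z^d is the lattice
 coordinate [v] and b labels the vertex orbit; the representatives V_0 are the vertices
 (0, b), b in Vs (the fundamental vertex set).  adj is the (symmetric, translation
 invariant) adjacency relation of the periodic graph.  Oriented edges of the quotient
 starting at b correspond to neighbours u of (0,b) in the periodic graph, and the edge
 index is tau = [u] - [(0,b)] = fst u.\<close>

definition kappa :: "('v \<Rightarrow> 'v \<Rightarrow> bool) \<Rightarrow> 'v \<Rightarrow> nat" where
  "kappa adj v = card {u. adj v u}"

definition fiber_op ::
  "((int^'d) \<times> 'b \<Rightarrow> (int^'d) \<times> 'b \<Rightarrow> bool) \<Rightarrow> real^'d \<Rightarrow> ('b \<Rightarrow> complex) \<Rightarrow> 'b \<Rightarrow> complex" where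
  "fiber_op adj \<theta> f b = f b -
     (\<Sum>u\<in>{u. adj (0, b) u}.
        cis (\<Sum>i\<in>UNIV. real_of_int (fst u $ i) * \<theta> $ i)
          / complex_of_real (sqrt (real (kappa adj (0, b)) * real (kappa adj u))) * f (snd u))"

definition is_eig ::
  "((int^'d) \<times> 'b \<Rightarrow> (int^'d) \<times> 'b \<Rightarrow> bool) \<Rightarrow> 'b set \<Rightarrow> real^'d \<Rightarrow> real \<Rightarrow> bool" where
  "is_eig adj Vs \<theta> lam \<longleftrightarrow>
     (\<exists>f. (\<exists>b\<in>Vs. f b \<noteq> 0) \<and> (\<forall>b\<in>Vs. fiber_op adj \<theta> f b = complex_of_real lam * f b))"

text \<open>Multiplicity of lam as eigenvalue of the fiber operator: the (complex) dimension
 of its eigenspace in l^2(Vs), i.e. the maximal number of linearly independent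
 eigenfunctions (the fiber operator is self-adjoint, so this is also the algebraic
 multiplicity).\<close>
definition eigmult ::
  "((int^'d) \<times> 'b \<Rightarrow> (int^'d) \<times> 'b \<Rightarrow> bool) \<Rightarrow> 'b set \<Rightarrow> real^'d \<Rightarrow> real \<Rightarrow> nat" where
  "eigmult adj Vs \<theta> lam = (GREATEST n. \<exists>fs :: nat \<Rightarrow> 'b \<Rightarrow> complex.
       (\<forall>j<n. \<forall>b\<in>Vs. fiber_op adj \<theta> (fs j) b = complex_of_real lam * fs j b) \<and>
       (\<forall>c :: nat \<Rightarrow> complex. (\<forall>b\<in>Vs. (\<Sum>j<n. c j * fs j b) = 0) \<longrightarrow> (\<forall>j<n. c j = 0)))"

definition eigcount ::
  "((int^'d) \<times> 'b \<Rightarrow> (int^'d) \<times> 'b \<Rightarrow> bool) \<Rightarrow> 'b set \<Rightarrow> real^'d \<Rightarrow> real \<Rightarrow> nat" where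
  "eigcount adj Vs \<theta> lam = (\<Sum>mu\<in>{mu. mu \<le> lam \<and> is_eig adj Vs \<theta> mu}. eigmult adj Vs \<theta> mu)"

text \<open>Band functions: the n-th eigenvalue (n = 1..card Vs) in increasing order, counted
 with multiplicity.\<close>
definition band ::
  "((int^'d) \<times> 'b \<Rightarrow> (int^'d) \<times> 'b \<Rightarrow> bool) \<Rightarrow> 'b set \<Rightarrow> nat \<Rightarrow> real^'d \<Rightarrow> real" where
  "band adj Vs n \<theta> = Inf {lam. n \<le> eigcount adj Vs \<theta> lam}"

definition degenerate_band ::
  "((int^'d) \<times> 'b \<Rightarrow> (int^'d) \<times> 'b \<Rightarrow> bool) \<Rightarrow> 'b set \<Rightarrow> nat \<Rightarrow> bool" where
  "degenerate_band adj Vs n \<longleftrightarrow> (\<exists>lam. \<forall>\<theta>. band adj Vs n \<theta> = lam)"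

text \<open>Spectrum = union of the bands; absolutely continuous spectrum = union of the
 nondegenerate bands; flat-band spectrum = values of the degenerate bands
 (eigenvalues of infinite multiplicity).\<close>
definition spec ::
  "((int^'d) \<times> 'b \<Rightarrow> (int^'d) \<times> 'b \<Rightarrow> bool) \<Rightarrow> 'b set \<Rightarrow> real set" where
  "spec adj Vs = (\<Union>n\<in>{1..card Vs}. range (band adj Vs n))"

definition spec_ac ::
  "((int^'d) \<times> 'b \<Rightarrow> (int^'d) \<times> 'b \<Rightarrow> bool) \<Rightarrow> 'b set \<Rightarrow> real set" where
  "spec_ac adj Vs = (\<Union>n\<in>{n\<in>{1..card Vs}. \<not> degenerate_band adj Vs n}. range (band adj Vs n))"

definition spec_fb ::
  "((int^'d) \<times> 'b \<Rightarrow> (int^'d) \<times> 'b \<Rightarrow> bool) \<Rightarrow> 'b set \<Rightarrow> real set" where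
  "spec_fb adj Vs = {lam. \<exists>n\<in>{1..card Vs}. \<forall>\<theta>. band adj Vs n \<theta> = lam}"

text \<open>Vertex (m, None) is the lattice point m; vertex (m, Some (s, k)), 1 \<le> k \<le> N,
 is the k-th inserted vertex on the edge (m, m + a_s).\<close>
type_synonym ('d) sv = "(int^'d) \<times> ('d \<times> nat) option"

definition fund_verts :: "nat \<Rightarrow> ('d \<times> nat) option set" where
  "fund_verts N = insert None {Some (s, k) | s k. 1 \<le> k \<and> k \<le> N}"

definition sub_edge :: "nat \<Rightarrow> ('d::finite) sv \<Rightarrow> 'd sv \<Rightarrow> bool" where
  "sub_edge N v u \<longleftrightarrow>
     (\<exists>m s. v = (m, None) \<and> u = (m, Some (s, 1))) \<or>
     (\<exists>m s k. 1 \<le> k \<and> k + 1 \<le> N \<and> v = (m, Some (s, k)) \<and> u = (m, Some (s, k + 1))) \<or>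
     (\<exists>m s. v = (m, Some (s, N)) \<and> u = (m + axis s 1, None))"

definition sub_adj :: "nat \<Rightarrow> ('d::finite) sv \<Rightarrow> 'd sv \<Rightarrow> bool" where
  "sub_adj N v u \<longleftrightarrow> sub_edge N v u \<or> sub_edge N u v"

end

theory Submission
  imports Defs "HOL-Library.Function_Algebras"
begin

text \<open>
  On the fiber over \<theta>, a function with eigenvalue 1 - cos \<phi> is a cos (k \<phi>) + Q_s sin (k \<phi>)
  along the s-th subdivided edge, and the gluing conditions at the lattice vertex leave two kinds
  of solutions.  If the value a at the lattice vertex is nonzero, they force the dispersion relation
  cos ((N + 1) \<phi>) = (1/d) \<Sum>_s cos \<theta>_s, which has exactly one solution \<phi> in each interval
  [q \<pi>/(N + 1), (q + 1) \<pi>/(N + 1)], q = 0..N.  If a = 0, then \<phi> = j \<pi>/(N + 1) with 1 \<le> j \<le> N and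
  the weights Q_s only have to satisfy one linear condition, which gives d - 1 independent
  eigenfunctions for every \<theta>.  Together these are d N + 1 independent eigenfunctions, the
  dimension of the fiber, so they are all of them.  Sorting the eigenvalues, the bands of index
  q d + 1 are the dispersive ones, which sweep out [1 - cos (q \<pi>/(N + 1)), 1 - cos ((q + 1) \<pi>/(N + 1))]
  and together cover [0, 2]; all other bands are the constant values 1 - cos (j \<pi>/(N + 1)).  The
  multiplicity of these exceeds d - 1 only where a dispersive band touches them, i.e. where
  \<Sum>_s cos \<theta>_s = \<plusminus>d, a null set.
\<close>

section \<open>The fiber operator of the subdivided lattice\<close>

lemma sub_adj_node_nbrs:
  assumes "N \<ge> 1"
  shows "{u. sub_adj N ((m::int^'d::finite), None) u} =
     range (\<lambda>s. (m, Some (s, 1))) \<union> range (\<lambda>s. (m - axis s 1, Some (s, N)))"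
  using assms unfolding sub_adj_def sub_edge_def
  by (auto simp: algebra_simps) (metis diff_add_cancel)

lemma sub_adj_edge_nbrs:
  assumes "1 \<le> k" "k \<le> N"
  shows "{u. sub_adj N ((m::int^'d::finite), Some (s, k)) u} =
     {if k = 1 then (m, None) else (m, Some (s, k - 1)),
      if k = N then (m + axis s 1, None) else (m, Some (s, k + 1))}"
  using assms unfolding sub_adj_def sub_edge_def
  by (auto split: if_splits)

lemma kappa_sub_adj_node:
  assumes "N \<ge> 1"
  shows "kappa (sub_adj N) ((m::int^'d::finite), None) = 2 * CARD('d)"
proof -
  have "inj (\<lambda>s::'d. (m, Some (s, 1::nat)))" "inj (\<lambda>s::'d. (m - axis s 1, Some (s, N)))"
    by (auto simp: inj_def)
  moreover have "range (\<lambda>s. (m, Some (s, 1))) \<inter> range (\<lambda>s::'d. (m - axis s 1, Some (s, N))) = {}"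
    by auto
  ultimately show ?thesis
    unfolding kappa_def sub_adj_node_nbrs[OF assms] by (simp add: card_Un_disjoint card_image)
qed

lemma kappa_sub_adj_edge:
  assumes "1 \<le> k" "k \<le> N"
  shows "kappa (sub_adj N) ((m::int^'d::finite), Some (s, k)) = 2"
  unfolding kappa_def sub_adj_edge_nbrs[OF assms] by (auto simp: card_insert_if)

lemma sum_axis_mult: "(\<Sum>i\<in>UNIV. real_of_int (axis s 1 $ i) * (\<theta>::real^'d::finite) $ i) = \<theta> $ s"
proof -
  have "real_of_int (axis s 1 $ i) * \<theta> $ i = (if i = s then \<theta> $ s else 0)" for i
    by (simp add: axis_def)
  then show ?thesis by simp
qed

lemma sqrt_double_mult_two: "sqrt (real (2 * n) * 2) = 2 * sqrt (real n)"
proof -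
  have "real (2 * n) * 2 = 2\<^sup>2 * real n" by simp
  then show ?thesis by (simp add: real_sqrt_mult)
qed

text \<open>The Floquet phase enters through the edges from (- a_s, Some (s, N)) to the lattice
  vertex.\<close>

lemma fiber_op_node:
  fixes \<theta> :: "real^'d::finite" and f :: "('d \<times> nat) option \<Rightarrow> complex"
  assumes "N \<ge> 1"
  shows "fiber_op (sub_adj N) \<theta> f None = f None -
     (\<Sum>s\<in>UNIV. f (Some (s, 1)) + cis (- \<theta> $ s) * f (Some (s, N))) / complex_of_real (2 * sqrt CARD('d))"
proof -
  let ?K = "complex_of_real (2 * sqrt CARD('d))"
  let ?T = "\<lambda>u::'d sv. cis (\<Sum>i\<in>UNIV. real_of_int (fst u $ i) * \<theta> $ i)
          / complex_of_real (sqrt (real (kappa (sub_adj N) (0::int^'d, None)) * real (kappa (sub_adj N) u))) * f (snd u)"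
  have inj: "inj (\<lambda>s::'d. (0::int^'d, Some (s, 1::nat)))" "inj (\<lambda>s::'d. (0 - axis s 1::int^'d, Some (s, N)))"
    by (auto simp: inj_def)
  have kappa0: "kappa (sub_adj N) (0::int^'d, None) = 2 * CARD('d)"
    using kappa_sub_adj_node[OF assms] .
  have first: "?T (0, Some (s, 1)) = f (Some (s, 1)) / ?K" for s
    using kappa_sub_adj_edge[of 1 N 0 s] assms kappa0 by (simp add: sqrt_double_mult_two real_sqrt_mult)
  have last: "?T (0 - axis s 1, Some (s, N)) = cis (- \<theta> $ s) * f (Some (s, N)) / ?K" for s
  proof -
    have "(\<Sum>i\<in>UNIV. real_of_int ((0 - axis s 1) $ i) * \<theta> $ i) = - \<theta> $ s"
      using sum_axis_mult[of s \<theta>] by (simp add: sum_negf)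
    then show ?thesis
      using kappa_sub_adj_edge[of N N "0 - axis s 1" s] assms kappa0
      by (simp add: sqrt_double_mult_two real_sqrt_mult)
  qed
  have "fiber_op (sub_adj N) \<theta> f None = f None - sum ?T {u. sub_adj N (0, None) u}"
    unfolding fiber_op_def by simp
  also have "sum ?T {u. sub_adj N (0, None) u} =
     sum ?T (range (\<lambda>s. (0, Some (s, 1)))) + sum ?T (range (\<lambda>s. (0 - axis s 1, Some (s, N))))"
    unfolding sub_adj_node_nbrs[OF assms] by (rule sum.union_disjoint) auto
  also have "\<dots> = (\<Sum>s\<in>UNIV. f (Some (s, 1)) / ?K) + (\<Sum>s\<in>UNIV. cis (- \<theta> $ s) * f (Some (s, N)) / ?K)"
    unfolding sum.reindex[OF inj(1)] sum.reindex[OF inj(2)] comp_def first last ..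
  also have "\<dots> = (\<Sum>s\<in>UNIV. f (Some (s, 1)) + cis (- \<theta> $ s) * f (Some (s, N))) / ?K"
    by (simp add: sum.distrib sum_divide_distrib add_divide_distrib)
  finally show ?thesis .
qed

lemma fiber_op_edge:
  fixes \<theta> :: "real^'d::finite" and f :: "('d \<times> nat) option \<Rightarrow> complex"
  assumes "1 \<le> k" "k \<le> N"
  shows "fiber_op (sub_adj N) \<theta> f (Some (s, k)) = f (Some (s, k)) -
     ((if k = 1 then f None / complex_of_real (2 * sqrt CARD('d)) else f (Some (s, k - 1)) / 2)
    + (if k = N then cis (\<theta> $ s) * f None / complex_of_real (2 * sqrt CARD('d)) else f (Some (s, k + 1)) / 2))"
proof -
  let ?T = "\<lambda>u::'d sv. cis (\<Sum>i\<in>UNIV. real_of_int (fst u $ i) * \<theta> $ i)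
          / complex_of_real (sqrt (real (kappa (sub_adj N) (0, Some (s, k))) * real (kappa (sub_adj N) u))) * f (snd u)"
  let ?p = "if k = 1 then (0::int^'d, None) else (0, Some (s, k - 1))"
  let ?q = "if k = N then (0 + axis s 1::int^'d, None) else (0, Some (s, k + 1))"
  have kappa0: "kappa (sub_adj N) (0::int^'d, Some (s, k)) = 2"
    using kappa_sub_adj_edge[OF assms] .
  have "?p \<noteq> ?q" by auto
  then have "sum ?T {u. sub_adj N (0, Some (s, k)) u} = ?T ?p + ?T ?q"
    unfolding sub_adj_edge_nbrs[OF assms] by simp
  moreover have "?T ?p = (if k = 1 then f None / complex_of_real (2 * sqrt CARD('d)) else f (Some (s, k - 1)) / 2)"
  proof (cases "k = 1")
    case True
    then show ?thesis using kappa_sub_adj_node[of N "0::int^'d"] assms kappa0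
      by (simp add: real_sqrt_mult sqrt_double_mult_two mult.commute)
  qed (use kappa_sub_adj_edge[of "k - 1" N 0 s] assms kappa0 in simp)
  moreover have "?T ?q = (if k = N then cis (\<theta> $ s) * f None / complex_of_real (2 * sqrt CARD('d))
      else f (Some (s, k + 1)) / 2)"
  proof (cases "k = N")
    case True
    then show ?thesis using kappa_sub_adj_node[of N "0 + axis s 1::int^'d"] assms kappa0 sum_axis_mult[of s \<theta>]
      by (simp add: real_sqrt_mult sqrt_double_mult_two mult.commute)
  qed (use kappa_sub_adj_edge[of "k + 1" N 0 s] assms kappa0 in simp)
  ultimately show ?thesis
    unfolding fiber_op_def by simp
qed

section \<open>Eigenvalue multiplicities of a local fiber operator\<close>

lemma sum_fun_apply: "(\<Sum>v\<in>S. g v) x = (\<Sum>v\<in>S. g v x)"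
  for g :: "'c \<Rightarrow> 'a \<Rightarrow> 'b::comm_monoid_add"
  by (induct S rule: infinite_finite_induct) (auto simp: plus_fun_def zero_fun_def)

definition fun_scale :: "complex \<Rightarrow> ('a \<Rightarrow> complex) \<Rightarrow> 'a \<Rightarrow> complex" where
  "fun_scale c f = (\<lambda>x. c * f x)"

interpretation cfun: vector_space "fun_scale :: complex \<Rightarrow> ('a \<Rightarrow> complex) \<Rightarrow> 'a \<Rightarrow> complex"
  by unfold_locales (auto simp: fun_scale_def plus_fun_def algebra_simps)

definition lin_indep_on :: "'b set \<Rightarrow> nat \<Rightarrow> (nat \<Rightarrow> 'b \<Rightarrow> complex) \<Rightarrow> bool" where
  "lin_indep_on V n fs \<longleftrightarrow> (\<forall>c. (\<forall>b\<in>V. (\<Sum>j<n. c j * fs j b) = 0) \<longrightarrow> (\<forall>j<n. c j = 0))"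

definition restrict0 :: "'b set \<Rightarrow> ('b \<Rightarrow> complex) \<Rightarrow> 'b \<Rightarrow> complex" where
  "restrict0 V f = (\<lambda>b. if b \<in> V then f b else 0)"

definition unit_fun :: "'b \<Rightarrow> 'b \<Rightarrow> complex" where
  "unit_fun a = (\<lambda>b. if b = a then 1 else 0)"

lemma restrict0_in_span:
  assumes "finite V"
  shows "restrict0 V f \<in> cfun.span (unit_fun ` V)"
proof -
  have "restrict0 V f = (\<Sum>a\<in>V. fun_scale (f a) (unit_fun a))"
    using assms
    by (auto simp: restrict0_def sum_fun_apply fun_scale_def unit_fun_def fun_eq_iff if_distrib cong: if_cong)
  also have "\<dots> \<in> cfun.span (unit_fun ` V)"
    by (intro cfun.span_sum cfun.span_scale cfun.span_base) auto
  finally show ?thesis .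
qed

lemma lin_indep_onD:
  assumes "lin_indep_on V n fs" "\<forall>b\<in>V. (\<Sum>j<n. c j * fs j b) = 0" "j < n"
  shows "c j = 0"
  using assms unfolding lin_indep_on_def by blast

lemma lin_indep_on_nonzero:
  assumes "lin_indep_on V n fs" "j < n"
  shows "\<exists>b\<in>V. fs j b \<noteq> 0"
proof (rule ccontr)
  assume "\<not> ?thesis"
  moreover have "(\<Sum>k<n. (if k = j then 1 else 0) * fs k b) = fs j b" for b
    using assms(2) by (subst sum.cong[where h="\<lambda>k. if k = j then fs j b else 0"]) auto
  ultimately have "\<forall>b\<in>V. (\<Sum>k<n. (if k = j then 1 else 0) * fs k b) = 0"
    by simp
  from lin_indep_onD[OF assms(1) this assms(2)] show False by simp
qed

lemma lin_indep_on_one_iff: "lin_indep_on V 1 (\<lambda>_. f) \<longleftrightarrow> (\<exists>b\<in>V. f b \<noteq> 0)"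
  unfolding lin_indep_on_def by auto

lemma lin_indep_on_inj:
  assumes "lin_indep_on V n fs"
  shows "inj_on (\<lambda>j. restrict0 V (fs j)) {..<n}"
proof (rule inj_onI, rule ccontr)
  fix i j assume ij: "i \<in> {..<n}" "j \<in> {..<n}" "restrict0 V (fs i) = restrict0 V (fs j)" "i \<noteq> j"
  let ?c = "\<lambda>k. if k = i then 1 else if k = j then -1 else (0::complex)"
  have "(\<Sum>k<n. ?c k * fs k b) = 0" if b: "b \<in> V" for b
  proof -
    have "fs i b = fs j b" using fun_cong[OF ij(3), of b] b by (simp add: restrict0_def)
    moreover have "(\<Sum>k<n. ?c k * fs k b) = (\<Sum>k<n. (if k = i then fs i b else 0) + (if k = j then - fs j b else 0))"
      by (rule sum.cong) (use ij in auto)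
    ultimately show ?thesis using ij by (simp add: sum.distrib)
  qed
  from lin_indep_onD[OF assms _ , of ?c i] this ij show False by auto
qed

lemma lin_indep_on_independent:
  assumes "lin_indep_on V n fs"
  shows "\<not> cfun.dependent ((\<lambda>j. restrict0 V (fs j)) ` {..<n})"
proof
  let ?r = "\<lambda>j. restrict0 V (fs j)"
  assume "cfun.dependent (?r ` {..<n})"
  then obtain u v where uv: "v \<in> ?r ` {..<n}" "u v \<noteq> 0" "(\<Sum>w\<in>?r ` {..<n}. fun_scale (u w) w) = 0"
    by (auto simp: cfun.dependent_finite)
  have "(\<Sum>j<n. fun_scale (u (?r j)) (?r j)) = 0"
    using uv(3) by (simp add: sum.reindex[OF lin_indep_on_inj[OF assms]])
  then have zero: "(\<Sum>j<n. u (?r j) * restrict0 V (fs j) b) = 0" for b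
    by (simp add: fun_eq_iff sum_fun_apply fun_scale_def)
  have "\<forall>b\<in>V. (\<Sum>j<n. u (?r j) * fs j b) = 0"
  proof
    fix b assume "b \<in> V"
    then show "(\<Sum>j<n. u (?r j) * fs j b) = 0" using zero[of b] by (simp add: restrict0_def)
  qed
  from lin_indep_onD[OF assms this] uv(1,2) show False by auto
qed

lemma lin_indep_on_le_card:
  assumes "finite V" "lin_indep_on V n fs"
  shows "n \<le> card V"
proof -
  let ?r = "\<lambda>j. restrict0 V (fs j)"
  have "card (?r ` {..<n}) \<le> card (unit_fun ` V)"
    using cfun.independent_span_bound[of "unit_fun ` V" "?r ` {..<n}"] assms
      lin_indep_on_independent[OF assms(2)] restrict0_in_span by blast
  moreover have "card (?r ` {..<n}) = n" using card_image[OF lin_indep_on_inj[OF assms(2)]] by simp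
  ultimately show ?thesis using card_image_le[OF assms(1), of unit_fun] by linarith
qed

lemma fiber_op_sum:
  "fiber_op adj \<theta> (\<lambda>x. \<Sum>j\<in>J. c j * g j x) b = (\<Sum>j\<in>J. c j * fiber_op adj \<theta> (g j) b)"
  unfolding fiber_op_def
  by (simp add: sum_subtractf right_diff_distrib sum_distrib_left sum.swap[of _ J] mult.left_commute)

lemma fiber_op_scale: "fiber_op adj \<theta> (\<lambda>x. c * g x) b = c * fiber_op adj \<theta> g b"
  using fiber_op_sum[of adj \<theta> "\<lambda>_. c" "\<lambda>_. g" "{()}" b] by simp

definition eigvec where
  "eigvec adj \<theta> V lam f \<longleftrightarrow> (\<forall>b\<in>V. fiber_op adj \<theta> f b = complex_of_real lam * f b)"

definition eigfam where
  "eigfam adj \<theta> V lam n fs \<longleftrightarrow> (\<forall>j<n. eigvec adj \<theta> V lam (fs j)) \<and> lin_indep_on V n fs"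

lemma eigmult_eq_Greatest_eigfam: "eigmult adj V \<theta> lam = (GREATEST n. \<exists>fs. eigfam adj \<theta> V lam n fs)"
  unfolding eigmult_def eigfam_def eigvec_def lin_indep_on_def by simp

text \<open>Locality makes the fiber operator an operator on the finite-dimensional space of
  functions on V.\<close>

locale local_fiber_op =
  fixes adj :: "(int^'d::finite) \<times> 'b \<Rightarrow> (int^'d) \<times> 'b \<Rightarrow> bool" and \<theta> :: "real^'d" and V :: "'b set"
  assumes finite_V: "finite V"
    and local: "\<And>f g b. (\<forall>b\<in>V. f b = g b) \<Longrightarrow> b \<in> V \<Longrightarrow> fiber_op adj \<theta> f b = fiber_op adj \<theta> g b"
begin

abbreviation "em lam \<equiv> eigmult adj V \<theta> lam"

lemma eigfam_le_card: "eigfam adj \<theta> V lam n fs \<Longrightarrow> n \<le> card V"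
  unfolding eigfam_def using lin_indep_on_le_card finite_V by blast

lemma eigmult_ge: "eigfam adj \<theta> V lam n fs \<Longrightarrow> n \<le> em lam"
  unfolding eigmult_eq_Greatest_eigfam by (rule Greatest_le_nat[of _ n "card V"]) (use eigfam_le_card in auto)

lemma eigfam_eigmult: "\<exists>fs. eigfam adj \<theta> V lam (em lam) fs"
  unfolding eigmult_eq_Greatest_eigfam
  by (rule GreatestI_nat[of _ 0 "card V"]) (auto simp: eigfam_def lin_indep_on_def intro: eigfam_le_card)

lemma is_eig_iff_eigmult: "is_eig adj V \<theta> lam \<longleftrightarrow> em lam \<ge> 1"
proof
  assume "is_eig adj V \<theta> lam"
  then obtain f where "\<exists>b\<in>V. f b \<noteq> 0" "eigvec adj \<theta> V lam f"
    unfolding is_eig_def eigvec_def by blast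
  then have "eigfam adj \<theta> V lam 1 (\<lambda>_. f)"
    unfolding eigfam_def using lin_indep_on_one_iff by blast
  then show "em lam \<ge> 1" by (rule eigmult_ge)
next
  assume "em lam \<ge> 1"
  moreover obtain fs where "eigfam adj \<theta> V lam (em lam) fs" using eigfam_eigmult by blast
  ultimately show "is_eig adj V \<theta> lam"
    unfolding is_eig_def eigfam_def eigvec_def using lin_indep_on_nonzero[of V "em lam" fs 0] by auto
qed

lemma eigvec_sum_eq_zero:
  assumes "finite M" "\<forall>mu\<in>M. eigvec adj \<theta> V mu (v mu)" "\<forall>b\<in>V. (\<Sum>mu\<in>M. v mu b) = 0"
  shows "\<forall>mu\<in>M. \<forall>b\<in>V. v mu b = 0"
  using assms
proof (induction M arbitrary: v rule: finite_induct)
  case (insert m M)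
  text \<open>Applying the operator minus m to the vanishing sum removes the m-component.\<close>
  have eig_sum: "(\<Sum>mu\<in>insert m M. complex_of_real mu * v mu b) = 0" if b: "b \<in> V" for b
  proof -
    have "fiber_op adj \<theta> (\<lambda>x. \<Sum>mu\<in>insert m M. 1 * v mu x) b = fiber_op adj \<theta> (\<lambda>x. 0 * v m x) b"
      by (rule local) (use insert.prems(2) b in auto)
    then have "(\<Sum>mu\<in>insert m M. fiber_op adj \<theta> (v mu) b) = 0"
      by (simp only: fiber_op_sum fiber_op_scale) simp
    then show ?thesis using insert.prems(1) b unfolding eigvec_def by simp
  qed
  let ?w = "\<lambda>mu x. complex_of_real (mu - m) * v mu x"
  have "\<forall>b\<in>V. (\<Sum>mu\<in>M. ?w mu b) = 0"
  proof
    fix b assume b: "b \<in> V"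
    have "(\<Sum>mu\<in>M. ?w mu b) = (\<Sum>mu\<in>insert m M. of_real mu * v mu b) - of_real m * (\<Sum>mu\<in>insert m M. v mu b)"
      using insert.hyps by (simp add: algebra_simps sum_subtractf sum_distrib_left)
    then show "(\<Sum>mu\<in>M. ?w mu b) = 0" using eig_sum[OF b] insert.prems(2) b by simp
  qed
  moreover have "\<forall>mu\<in>M. eigvec adj \<theta> V mu (?w mu)"
    using insert.prems(1) unfolding eigvec_def by (simp add: fiber_op_scale)
  ultimately have "\<forall>mu\<in>M. \<forall>b\<in>V. v mu b = 0"
    using insert.IH insert.hyps by fastforce
  moreover from this have "\<forall>b\<in>V. v m b = 0"
    using insert.prems(2) insert.hyps by simp
  ultimately show ?case by auto
qed simp

lemma eigvec_unique_eigenvalue: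
  assumes "eigvec adj \<theta> V mu f" "eigvec adj \<theta> V mu' g" "\<forall>b\<in>V. f b = g b" "mu \<noteq> mu'" "b \<in> V"
  shows "f b = 0"
proof -
  have "complex_of_real mu * f b = fiber_op adj \<theta> f b" using assms(1,5) by (simp add: eigvec_def)
  also have "\<dots> = fiber_op adj \<theta> g b" by (rule local) (use assms(3,5) in auto)
  also have "\<dots> = complex_of_real mu' * f b" using assms(2,3,5) by (simp add: eigvec_def)
  finally show ?thesis using assms(4) by (simp add: algebra_simps)
qed

lemma eigfam_restrict_disjoint:
  assumes F: "eigfam adj \<theta> V mu n F" and F': "eigfam adj \<theta> V mu' n' F'" and "mu \<noteq> mu'"
  shows "(\<lambda>j. restrict0 V (F j)) ` {..<n} \<inter> (\<lambda>j. restrict0 V (F' j)) ` {..<n'} = {}"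
proof (rule ccontr)
  assume "\<not> ?thesis"
  then obtain j j' where j: "j < n" "j' < n'" and "restrict0 V (F j) = restrict0 V (F' j')" by auto
  then have "\<forall>b\<in>V. F j b = F' j' b"
    by (auto simp: restrict0_def fun_eq_iff split: if_splits)
  then have "\<forall>b\<in>V. F j b = 0"
    using eigvec_unique_eigenvalue F F' j assms(3) unfolding eigfam_def by blast
  with lin_indep_on_nonzero[of V n F j] F j(1) show False by (auto simp: eigfam_def)
qed

lemma eigfams_independent:
  assumes M: "finite M" and F: "\<And>mu. eigfam adj \<theta> V mu (n mu) (F mu)"
  shows "\<not> cfun.dependent (\<Union>mu\<in>M. (\<lambda>j. restrict0 V (F mu j)) ` {..<n mu})"
proof
  let ?r = "\<lambda>mu j. restrict0 V (F mu j)"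
  let ?S = "\<Union>mu\<in>M. ?r mu ` {..<n mu}"
  have indep: "lin_indep_on V (n mu) (F mu)" for mu using F unfolding eigfam_def by blast
  have inj: "inj_on (?r mu) {..<n mu}" for mu using lin_indep_on_inj[OF indep] .
  assume "cfun.dependent ?S"
  then obtain u f0 where uf0: "f0 \<in> ?S" "u f0 \<noteq> 0" "(\<Sum>f\<in>?S. fun_scale (u f) f) = 0"
    using M by (auto simp: cfun.dependent_finite)
  define w where "w mu = (\<lambda>b. \<Sum>j<n mu. u (?r mu j) * F mu j b)" for mu
  have "(\<Sum>f\<in>?S. fun_scale (u f) f) = (\<Sum>mu\<in>M. \<Sum>j<n mu. fun_scale (u (?r mu j)) (?r mu j))"
    using M eigfam_restrict_disjoint[OF F F] by (subst sum.UNION_disjoint) (auto simp: sum.reindex[OF inj])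
  then have zero: "(\<Sum>mu\<in>M. \<Sum>j<n mu. u (?r mu j) * restrict0 V (F mu j) b) = 0" for b
    using uf0(3) by (simp add: fun_eq_iff sum_fun_apply fun_scale_def)
  have "\<forall>b\<in>V. (\<Sum>mu\<in>M. w mu b) = 0"
  proof
    fix b assume "b \<in> V"
    then show "(\<Sum>mu\<in>M. w mu b) = 0" using zero[of b] by (simp add: w_def restrict0_def)
  qed
  moreover have "\<forall>mu\<in>M. eigvec adj \<theta> V mu (w mu)"
    using F unfolding eigvec_def eigfam_def w_def
    by (auto simp: fiber_op_sum sum_distrib_left mult.left_commute intro!: sum.cong)
  ultimately have w0: "\<forall>mu\<in>M. \<forall>b\<in>V. w mu b = 0"
    using eigvec_sum_eq_zero[OF M] by blast
  obtain mu j where mj: "mu \<in> M" "j < n mu" "f0 = ?r mu j" using uf0(1) by auto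
  with w0 have "\<forall>b\<in>V. (\<Sum>j<n mu. u (?r mu j) * F mu j b) = 0" by (simp add: w_def)
  from lin_indep_onD[OF indep this mj(2)] mj(3) uf0(2) show False by simp
qed

lemma sum_eigmult_le_card:
  assumes M: "finite M"
  shows "(\<Sum>mu\<in>M. em mu) \<le> card V"
proof -
  obtain F where F: "\<And>mu. eigfam adj \<theta> V mu (em mu) (F mu)" using eigfam_eigmult by metis
  let ?S = "\<Union>mu\<in>M. (\<lambda>j. restrict0 V (F mu j)) ` {..<em mu}"
  have "inj_on (\<lambda>j. restrict0 V (F mu j)) {..<em mu}" for mu
    using F lin_indep_on_inj unfolding eigfam_def by blast
  then have "card ?S = (\<Sum>mu\<in>M. em mu)"
    using M eigfam_restrict_disjoint[OF F F] by (subst card_UN_disjoint) (auto simp: card_image)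
  moreover have "?S \<subseteq> cfun.span (unit_fun ` V)"
    using restrict0_in_span[OF finite_V] by auto
  then have "card ?S \<le> card (unit_fun ` V)"
    using cfun.independent_span_bound eigfams_independent[OF M F] finite_V by blast
  moreover have "card (unit_fun ` V) \<le> card V" by (rule card_image_le[OF finite_V])
  ultimately show ?thesis by simp
qed

end

section \<open>Threshold and dispersive eigenvalues\<close>

definition threshold :: "nat \<Rightarrow> nat \<Rightarrow> real" where
  "threshold N j = 1 - cos (real j * pi / real (N + 1))"

text \<open>The solution of cos ((N + 1) \<phi>) = c in the interval [i \<pi>/(N + 1), (i + 1) \<pi>/(N + 1)].\<close>

definition disp_angle :: "nat \<Rightarrow> nat \<Rightarrow> real \<Rightarrow> real" where
  "disp_angle N i c =
     (if even i then real i * pi + arccos c else real (i + 1) * pi - arccos c) / real (N + 1)"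

definition disp_eig :: "nat \<Rightarrow> nat \<Rightarrow> real \<Rightarrow> real" where
  "disp_eig N i c = 1 - cos (disp_angle N i c)"

lemma threshold_angle_bounds:
  assumes "j \<le> N + 1"
  shows "0 \<le> real j * pi / real (N + 1) \<and> real j * pi / real (N + 1) \<le> pi"
proof -
  have "real j * pi \<le> real (N + 1) * pi" using assms by (intro mult_right_mono) auto
  then show ?thesis by (simp add: pos_divide_le_eq del: of_nat_Suc)
qed

lemma threshold_last [simp]: "threshold N (N + 1) = 2"
proof -
  have "real (N + 1) * pi / real (N + 1) = pi" by (simp del: of_nat_Suc)
  then show ?thesis unfolding threshold_def by simp
qed

lemma threshold_less: "j < j' \<Longrightarrow> j' \<le> N + 1 \<Longrightarrow> threshold N j < threshold N j'"
  unfolding threshold_def using threshold_angle_bounds[of j N] threshold_angle_bounds[of j' N]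
  by (auto intro!: cos_monotone_0_pi simp: divide_strict_right_mono)

lemma threshold_le: "j \<le> j' \<Longrightarrow> j' \<le> N + 1 \<Longrightarrow> threshold N j \<le> threshold N j'"
  using threshold_less[of j j' N] by (cases "j = j'") auto

lemma inj_on_threshold: "inj_on (threshold N) {..N + 1}"
  by (rule inj_onI) (metis atMost_iff less_irrefl linorder_neqE_nat threshold_less)

lemma threshold_bounds: "j \<le> N + 1 \<Longrightarrow> 0 \<le> threshold N j \<and> threshold N j \<le> 2"
  using threshold_le[of 0 j N] threshold_le[of j "N + 1" N] by (auto simp: threshold_def)

lemma threshold_intervals_cover: "(\<Union>q\<le>N. {threshold N q..threshold N (q + 1)}) = {0..2}"
proof
  show "(\<Union>q\<le>N. {threshold N q..threshold N (q + 1)}) \<subseteq> {0..2}"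
  proof
    fix x assume "x \<in> (\<Union>q\<le>N. {threshold N q..threshold N (q + 1)})"
    then obtain q where "q \<le> N" "threshold N q \<le> x" "x \<le> threshold N (q + 1)" by auto
    then show "x \<in> {0..2}" using threshold_bounds[of q N] threshold_bounds[of "q + 1" N] by auto
  qed
next
  show "{0..2} \<subseteq> (\<Union>q\<le>N. {threshold N q..threshold N (q + 1)})"
  proof
    fix x :: real assume x: "x \<in> {0..2}"
    define S where "S = {j. j \<le> N \<and> threshold N j \<le> x}"
    have S: "finite S" "0 \<in> S" using x by (auto simp: S_def threshold_def)
    define q where "q = Max S"
    have "q \<in> S" using S unfolding q_def by (intro Max_in) auto
    moreover have "x \<le> threshold N (q + 1)"
    proof (cases "q = N")
      case False
      with \<open>q \<in> S\<close> have "q + 1 \<le> N" by (auto simp: S_def)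
      moreover have "q + 1 \<notin> S" using Max_ge[OF S(1), of "q + 1"] unfolding q_def[symmetric] by auto
      ultimately show ?thesis by (auto simp: S_def)
    qed (use x threshold_last[of N] in simp)
    ultimately show "x \<in> (\<Union>q\<le>N. {threshold N q..threshold N (q + 1)})" by (auto simp: S_def)
  qed
qed

lemma thresholds_eq_one_plus_cos:
  "{1 + cos (pi * real n / real (N + 1)) | n. n \<in> {1..N}} = threshold N ` {1..N}"
proof -
  have reflect: "1 + cos (pi * real n / real (N + 1)) = threshold N (N + 1 - n)" if "n \<in> {1..N}" for n
  proof -
    have "real (N + 1 - n) * pi / real (N + 1) = pi - pi * real n / real (N + 1)"
      using that by (simp add: of_nat_diff field_simps del: of_nat_Suc)
    then show ?thesis by (simp add: threshold_def)
  qed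
  show ?thesis
  proof (intro set_eqI iffI)
    fix x assume "x \<in> {1 + cos (pi * real n / real (N + 1)) | n. n \<in> {1..N}}"
    then show "x \<in> threshold N ` {1..N}" using reflect by force
  next
    fix x assume "x \<in> threshold N ` {1..N}"
    then obtain j where j: "j \<in> {1..N}" "x = threshold N j" by auto
    then have "N + 1 - j \<in> {1..N}" "N + 1 - (N + 1 - j) = j" by auto
    then show "x \<in> {1 + cos (pi * real n / real (N + 1)) | n. n \<in> {1..N}}"
      using reflect[of "N + 1 - j"] j by force
  qed
qed

context
  fixes c :: real
  assumes c_bounds: "-1 \<le> c" "c \<le> 1"
begin

lemma disp_angle_bounds:
  "real i * pi / real (N + 1) \<le> disp_angle N i c \<and> disp_angle N i c \<le> real (i + 1) * pi / real (N + 1)"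
  using arccos_lbound[OF c_bounds] arccos_ubound[OF c_bounds]
  by (auto simp: disp_angle_def divide_right_mono algebra_simps)

lemma cos_disp_angle: "cos (real (N + 1) * disp_angle N i c) = c"
proof -
  have "real (N + 1) * disp_angle N i c =
      (if even i then real i * pi + arccos c else real (i + 1) * pi - arccos c)"
    unfolding disp_angle_def by (simp del: of_nat_Suc)
  then show ?thesis
    using c_bounds by (cases "even i") (simp_all add: cos_add cos_diff del: of_nat_Suc)
qed

lemma disp_angle_0_pi: "i \<le> N \<Longrightarrow> 0 \<le> disp_angle N i c \<and> disp_angle N i c \<le> pi"
  using disp_angle_bounds[of i N] threshold_angle_bounds[of i N] threshold_angle_bounds[of "i + 1" N]
  by linarith

lemma disp_eig_bounds: "i \<le> N \<Longrightarrow> threshold N i \<le> disp_eig N i c \<and> disp_eig N i c \<le> threshold N (i + 1)"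
  unfolding disp_eig_def threshold_def
  using disp_angle_bounds[of i N] threshold_angle_bounds[of i N] threshold_angle_bounds[of "i + 1" N]
    disp_angle_0_pi[of i N]
  by (auto intro!: cos_monotone_0_pi_le simp del: of_nat_Suc)

lemma disp_eig_eq_threshold:
  assumes "i \<le> N" "j \<le> N + 1" "disp_eig N i c = threshold N j"
  shows "c = (-1) ^ j \<and> (j = i \<or> j = i + 1)"
proof -
  have "cos (disp_angle N i c) = cos (real j * pi / real (N + 1))"
    using assms(3) by (simp add: disp_eig_def threshold_def)
  then have angle: "disp_angle N i c = real j * pi / real (N + 1)"
    using cos_inj_pi disp_angle_0_pi[OF assms(1)] threshold_angle_bounds[OF assms(2)] by blast
  then have "real (N + 1) * disp_angle N i c = real j * pi" by (simp del: of_nat_Suc)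
  then have "c = (-1) ^ j" using cos_disp_angle[of N i] by simp
  moreover have "real i * pi \<le> real j * pi" "real j * pi \<le> real (i + 1) * pi"
    using disp_angle_bounds[of i N] unfolding angle by (simp_all add: divide_le_cancel del: of_nat_Suc)
  then have "j = i \<or> j = i + 1" by (simp add: mult_le_cancel_right) linarith
  ultimately show ?thesis by blast
qed

end

lemma disp_eig_ends: "{disp_eig N q 1, disp_eig N q (-1)} = {threshold N q, threshold N (q + 1)}"
  by (cases "even q") (auto simp: disp_eig_def disp_angle_def threshold_def algebra_simps)

lemma disp_eig_nonconst: "q \<le> N \<Longrightarrow> disp_eig N q 1 \<noteq> disp_eig N q (-1)"
  using disp_eig_ends[of N q] threshold_less[of q "q + 1" N] by (auto simp: doubleton_eq_iff)

lemma disp_eig_surj: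
  assumes q: "q \<le> N" and x: "x \<in> {threshold N q..threshold N (q + 1)}"
  obtains c where "-1 \<le> c" "c \<le> 1" "disp_eig N q c = x"
proof -
  have x_bounds: "-1 \<le> 1 - x" "1 - x \<le> 1"
    using x threshold_bounds[of q N] threshold_bounds[of "q + 1" N] q by auto
  define \<phi> where "\<phi> = arccos (1 - x)"
  have \<phi>: "0 \<le> \<phi>" "\<phi> \<le> pi" "cos \<phi> = 1 - x" using arccos[OF x_bounds] by (auto simp: \<phi>_def)
  have angles: "0 \<le> real q * pi / real (N + 1)" "real q * pi / real (N + 1) \<le> pi"
    "0 \<le> real (q + 1) * pi / real (N + 1)" "real (q + 1) * pi / real (N + 1) \<le> pi"
    using threshold_angle_bounds[of q N] threshold_angle_bounds[of "q + 1" N] q by auto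
  have "cos \<phi> \<le> cos (real q * pi / real (N + 1))" using \<phi>(3) x by (simp add: threshold_def)
  then have "real q * pi / real (N + 1) \<le> \<phi>" using cos_mono_le_eq[OF \<phi>(1,2) angles(1,2)] by simp
  then have lo: "real q * pi \<le> real (N + 1) * \<phi>"
    by (simp add: divide_le_eq algebra_simps del: of_nat_Suc)
  have "cos (real (q + 1) * pi / real (N + 1)) \<le> cos \<phi>" using \<phi>(3) x by (simp add: threshold_def)
  then have "\<phi> \<le> real (q + 1) * pi / real (N + 1)" using cos_mono_le_eq[OF angles(3,4) \<phi>(1,2)] by simp
  then have hi: "real (N + 1) * \<phi> \<le> real (q + 1) * pi"
    by (simp add: le_divide_eq algebra_simps del: of_nat_Suc)
  define \<psi> where "\<psi> = (if even q then real (N + 1) * \<phi> - real q * pi else real (q + 1) * pi - real (N + 1) * \<phi>)"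
  have \<psi>: "0 \<le> \<psi>" "\<psi> \<le> pi" using lo hi by (auto simp: \<psi>_def algebra_simps)
  have "disp_angle N q (cos \<psi>) = \<phi>"
    unfolding disp_angle_def arccos_cos[OF \<psi>] by (simp add: \<psi>_def del: of_nat_Suc)
  then have "disp_eig N q (cos \<psi>) = x" using \<phi>(3) by (simp add: disp_eig_def)
  then show ?thesis using that[of "cos \<psi>"] by simp
qed

section \<open>Eigenfunctions\<close>

lemma mem_fund_verts: "b \<in> fund_verts N \<longleftrightarrow> b = None \<or> (\<exists>s k. b = Some (s, k) \<and> 1 \<le> k \<and> k \<le> N)"
  unfolding fund_verts_def by auto

lemma fund_verts_eq: "fund_verts N = insert None ((\<lambda>(s, k). Some (s, k)) ` (UNIV \<times> {1..N}))"
  unfolding fund_verts_def by auto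

lemma card_fund_verts: "card (fund_verts N :: ('d::finite \<times> nat) option set) = CARD('d) * N + 1"
proof -
  have "inj_on (\<lambda>(s, k). Some (s, k)) (UNIV \<times> {1..N} :: ('d \<times> nat) set)" by (auto simp: inj_on_def)
  then have "card ((\<lambda>(s, k). Some (s, k)) ` (UNIV \<times> {1..N} :: ('d \<times> nat) set)) = CARD('d) * N"
    by (simp add: card_image card_cartesian_product)
  then show ?thesis unfolding fund_verts_eq by (subst card_insert_disjoint) auto
qed

lemma local_fiber_op_sub_adj: "N \<ge> 1 \<Longrightarrow> local_fiber_op (sub_adj N) (\<theta>::real^'d::finite) (fund_verts N)"
proof unfold_locales
  assume N: "N \<ge> 1"
  show "finite (fund_verts N :: ('d \<times> nat) option set)" by (simp add: fund_verts_eq)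
  fix f g :: "('d \<times> nat) option \<Rightarrow> complex" and b :: "('d \<times> nat) option"
  assume fg: "\<forall>b\<in>fund_verts N. f b = g b" and b: "b \<in> fund_verts N"
  have edge: "f (Some (s, k)) = g (Some (s, k))" if "1 \<le> k" "k \<le> N" for s k
    using fg that by (auto simp: mem_fund_verts)
  have node: "f None = g None" using fg by (auto simp: mem_fund_verts)
  from b consider "b = None" | s k where "b = Some (s, k)" "1 \<le> k" "k \<le> N"
    by (auto simp: mem_fund_verts)
  then show "fiber_op (sub_adj N) \<theta> f b = fiber_op (sub_adj N) \<theta> g b"
  proof cases
    case 1
    then show ?thesis using N by (simp add: fiber_op_node edge node)
  next
    case 2
    then show ?thesis
      unfolding 2(1) fiber_op_edge[OF 2(2,3)] using node edge[of k s] edge[of "k - 1" s] edge[of "k + 1" s]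
      by auto
  qed
qed

text \<open>On every edge an eigenfunction for 1 - cos \<phi> solves the recurrence
  h (k - 1) + h (k + 1) = 2 cos \<phi> h k, so it has the form a cos (k \<phi>) + Q s sin (k \<phi>),
  the factor sqrt d at the lattice vertex coming from its degree 2 d.\<close>

lemma fiber_op_node_trig:
  fixes \<theta> :: "real^'d::finite" and h :: "('d \<times> nat) option \<Rightarrow> complex"
  assumes N: "N \<ge> 1"
    and node: "h None = a * complex_of_real (sqrt CARD('d))"
    and node_sum: "(\<Sum>s\<in>UNIV. h (Some (s, 1)) + cis (- \<theta> $ s) * h (Some (s, N)))
        = complex_of_real (2 * real CARD('d) * cos \<phi>) * a"
  shows "fiber_op (sub_adj N) \<theta> h None = complex_of_real (1 - cos \<phi>) * h None"
proof -
  have "complex_of_nat CARD('d) = complex_of_real (sqrt CARD('d)) * complex_of_real (sqrt CARD('d))"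
    by (simp flip: of_real_mult)
  then have "complex_of_real (2 * real CARD('d) * cos \<phi>) * a / complex_of_real (2 * sqrt CARD('d))
      = complex_of_real (cos \<phi>) * (a * complex_of_real (sqrt CARD('d)))"
    by (simp add: field_simps)
  then show ?thesis unfolding fiber_op_node[OF N] node_sum node by (simp add: algebra_simps)
qed

lemma fiber_op_edge_trig:
  fixes \<theta> :: "real^'d::finite" and h :: "('d \<times> nat) option \<Rightarrow> complex"
  assumes k: "1 \<le> k" "k \<le> N"
    and node: "h None = a * complex_of_real (sqrt CARD('d))"
    and edge: "\<And>k. h (Some (s, k)) = a * complex_of_real (cos (real k * \<phi>)) + Q * complex_of_real (sin (real k * \<phi>))"
    and far_end: "a * complex_of_real (cos (real (N + 1) * \<phi>)) + Q * complex_of_real (sin (real (N + 1) * \<phi>))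
        = cis (\<theta> $ s) * a"
  shows "fiber_op (sub_adj N) \<theta> h (Some (s, k)) = complex_of_real (1 - cos \<phi>) * h (Some (s, k))"
proof -
  define E where "E x = a * complex_of_real (cos (x * \<phi>)) + Q * complex_of_real (sin (x * \<phi>))" for x
  have prev: "(if k = 1 then h None / complex_of_real (2 * sqrt CARD('d)) else h (Some (s, k - 1)) / 2)
      = E (real k - 1) / 2"
    using k by (cases "k = 1") (simp_all add: node edge E_def field_simps of_nat_diff)
  have succ: "(if k = N then cis (\<theta> $ s) * h None / complex_of_real (2 * sqrt CARD('d))
      else h (Some (s, k + 1)) / 2) = E (real k + 1) / 2"
    using far_end by (cases "k = N") (simp_all add: node edge E_def field_simps add.commute)
  have cos_sum: "cos ((x - 1) * \<phi>) + cos ((x + 1) * \<phi>) = 2 * cos \<phi> * cos (x * \<phi>)"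
    and sin_sum: "sin ((x - 1) * \<phi>) + sin ((x + 1) * \<phi>) = 2 * cos \<phi> * sin (x * \<phi>)" for x
    by (simp_all add: algebra_simps cos_add cos_diff sin_add sin_diff)
  have "E (real k - 1) + E (real k + 1) =
      a * complex_of_real (cos ((real k - 1) * \<phi>) + cos ((real k + 1) * \<phi>))
      + Q * complex_of_real (sin ((real k - 1) * \<phi>) + sin ((real k + 1) * \<phi>))"
    unfolding E_def by (simp add: algebra_simps)
  also have "\<dots> = complex_of_real (2 * cos \<phi>) * E (real k)"
    unfolding cos_sum sin_sum E_def by (simp add: algebra_simps)
  finally have "E (real k - 1) + E (real k + 1) = complex_of_real (2 * cos \<phi>) * E (real k)" .
  moreover have "h (Some (s, k)) = E (real k)" by (simp add: edge E_def)
  ultimately show ?thesis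
    unfolding fiber_op_edge[OF k] prev succ by (simp add: algebra_simps add_divide_distrib[symmetric])
qed

lemma eigvec_sub_adj_trig:
  fixes \<theta> :: "real^'d::finite" and h :: "('d \<times> nat) option \<Rightarrow> complex"
  assumes N: "N \<ge> 1"
    and node: "h None = a * complex_of_real (sqrt CARD('d))"
    and edge: "\<And>s k. h (Some (s, k)) = a * complex_of_real (cos (real k * \<phi>)) + Q s * complex_of_real (sin (real k * \<phi>))"
    and far_end: "\<And>s. a * complex_of_real (cos (real (N + 1) * \<phi>)) + Q s * complex_of_real (sin (real (N + 1) * \<phi>))
        = cis (\<theta> $ s) * a"
    and node_sum: "(\<Sum>s\<in>UNIV. h (Some (s, 1)) + cis (- \<theta> $ s) * h (Some (s, N)))
        = complex_of_real (2 * real CARD('d) * cos \<phi>) * a"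
  shows "eigvec (sub_adj N) \<theta> (fund_verts N) (1 - cos \<phi>) h"
  unfolding eigvec_def
proof
  fix b :: "('d \<times> nat) option" assume "b \<in> fund_verts N"
  then consider "b = None" | s k where "b = Some (s, k)" "1 \<le> k" "k \<le> N"
    by (auto simp: mem_fund_verts)
  then show "fiber_op (sub_adj N) \<theta> h b = complex_of_real (1 - cos \<phi>) * h b"
  proof cases
    case 1
    then show ?thesis using fiber_op_node_trig[OF N node node_sum] by simp
  next
    case 2
    then show ?thesis using fiber_op_edge_trig[OF 2(2,3) node edge far_end] by simp
  qed
qed

lemma cos_eq_of_sum_cos_extremal:
  fixes \<theta> :: "real^'d::finite"
  assumes "(\<Sum>s\<in>UNIV. cos (\<theta> $ s)) = real CARD('d) * C" "C = 1 \<or> C = -1"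
  shows "cos (\<theta> $ s) = C"
  using assms(2)
proof
  assume C: "C = 1"
  have "(\<Sum>s\<in>UNIV. 1 - cos (\<theta> $ s)) = 0" using assms(1) C by (simp add: sum_subtractf)
  then have "\<forall>s\<in>UNIV. 1 - cos (\<theta> $ s) = 0" by (subst (asm) sum_nonneg_eq_0_iff) auto
  then show ?thesis using C by auto
next
  assume C: "C = -1"
  have "(\<Sum>s\<in>UNIV. 1 + cos (\<theta> $ s)) = 0" using assms(1) C by (simp add: sum.distrib)
  moreover have "0 \<le> 1 + cos x" for x :: real using cos_ge_minus_one[of x] by linarith
  ultimately have "\<forall>s\<in>UNIV. 1 + cos (\<theta> $ s) = 0" by (subst (asm) sum_nonneg_eq_0_iff) auto
  then show ?thesis using C by (simp add: add_eq_0_iff)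
qed

lemma cis_eq_of_cos_extremal: "cos t = C \<Longrightarrow> C = 1 \<or> C = -1 \<Longrightarrow> cis t = complex_of_real C"
  using sin_cos_squared_add[of t] by (auto simp: complex_eq_iff)

text \<open>The eigenfunction on the dispersive branch: the edge coefficient is chosen so that the
  gluing condition at the far end of every edge holds.  If sin ((N + 1) \<phi>) = 0 the division
  returns 0, and then all cos (\<theta> $ s) equal cos ((N + 1) \<phi>) = \<plusminus>1, so the gluing still holds.\<close>

definition disp_coeff :: "nat \<Rightarrow> real^'d::finite \<Rightarrow> real \<Rightarrow> 'd \<Rightarrow> complex" where
  "disp_coeff N \<theta> \<phi> s =
     (cis (\<theta> $ s) - complex_of_real (cos (real (N + 1) * \<phi>))) / complex_of_real (sin (real (N + 1) * \<phi>))"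

definition disp_eigvec :: "nat \<Rightarrow> real^'d::finite \<Rightarrow> real \<Rightarrow> ('d \<times> nat) option \<Rightarrow> complex" where
  "disp_eigvec N \<theta> \<phi> b = (case b of None \<Rightarrow> complex_of_real (sqrt CARD('d))
     | Some (s, k) \<Rightarrow> complex_of_real (cos (real k * \<phi>)) + disp_coeff N \<theta> \<phi> s * complex_of_real (sin (real k * \<phi>)))"

context
  fixes \<theta> :: "real^'d::finite" and N :: nat and \<phi> :: real
  assumes dispersion: "(\<Sum>s\<in>UNIV. cos (\<theta> $ s)) = real CARD('d) * cos (real (N + 1) * \<phi>)"
begin

lemma disp_coeff_far_end:
  "complex_of_real (cos (real (N + 1) * \<phi>)) + disp_coeff N \<theta> \<phi> s * complex_of_real (sin (real (N + 1) * \<phi>))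
     = cis (\<theta> $ s)"
proof (cases "sin (real (N + 1) * \<phi>) = 0")
  case True
  then have "cos (real (N + 1) * \<phi>) = 1 \<or> cos (real (N + 1) * \<phi>) = -1"
    using sin_cos_squared_add[of "real (N + 1) * \<phi>"] by (simp add: power2_eq_1_iff)
  with dispersion have "cis (\<theta> $ s) = complex_of_real (cos (real (N + 1) * \<phi>))"
    using cos_eq_of_sum_cos_extremal cis_eq_of_cos_extremal by blast
  then show ?thesis using True by simp
qed (simp add: disp_coeff_def field_simps)

lemma disp_eigvec_edge_ends:
  "disp_eigvec N \<theta> \<phi> (Some (s, 1)) + cis (- \<theta> $ s) * disp_eigvec N \<theta> \<phi> (Some (s, N))
     = complex_of_real (2 * cos \<phi>) + complex_of_real (sin \<phi>) * (disp_coeff N \<theta> \<phi> s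
       + cis (- \<theta> $ s) * (complex_of_real (sin (real (N + 1) * \<phi>))
         - disp_coeff N \<theta> \<phi> s * complex_of_real (cos (real (N + 1) * \<phi>))))"
proof -
  define C where "C = cos (real (N + 1) * \<phi>)"
  define S where "S = sin (real (N + 1) * \<phi>)"
  let ?B = "disp_coeff N \<theta> \<phi>"
  have "real N * \<phi> = real (N + 1) * \<phi> - \<phi>" by (simp add: algebra_simps)
  then have cos_N: "cos (real N * \<phi>) = C * cos \<phi> + S * sin \<phi>"
    and sin_N: "sin (real N * \<phi>) = S * cos \<phi> - C * sin \<phi>"
    unfolding C_def S_def by (simp_all add: cos_diff sin_diff)
  have "disp_eigvec N \<theta> \<phi> (Some (s, N)) =
      complex_of_real (cos (real N * \<phi>)) + ?B s * complex_of_real (sin (real N * \<phi>))"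
    by (simp add: disp_eigvec_def)
  also have "\<dots> = complex_of_real (cos \<phi>) * (complex_of_real C + ?B s * complex_of_real S)
      + complex_of_real (sin \<phi>) * (complex_of_real S - ?B s * complex_of_real C)"
    unfolding cos_N sin_N by (simp add: algebra_simps)
  also have "complex_of_real C + ?B s * complex_of_real S = cis (\<theta> $ s)"
    using disp_coeff_far_end[of s] by (simp add: C_def S_def)
  finally have far: "disp_eigvec N \<theta> \<phi> (Some (s, N)) = complex_of_real (cos \<phi>) * cis (\<theta> $ s)
      + complex_of_real (sin \<phi>) * (complex_of_real S - ?B s * complex_of_real C)" .
  have "cis (- \<theta> $ s) * cis (\<theta> $ s) = 1" by (simp add: cis_mult)
  then have "cis (- \<theta> $ s) * disp_eigvec N \<theta> \<phi> (Some (s, N)) = complex_of_real (cos \<phi>)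
      + complex_of_real (sin \<phi>) * (cis (- \<theta> $ s) * (complex_of_real S - ?B s * complex_of_real C))"
    unfolding far by (simp add: algebra_simps)
  then show ?thesis by (simp add: disp_eigvec_def C_def S_def algebra_simps)
qed

lemma sum_disp_edge_defect:
  "(\<Sum>s\<in>UNIV. disp_coeff N \<theta> \<phi> s + cis (- \<theta> $ s) * (complex_of_real (sin (real (N + 1) * \<phi>))
     - disp_coeff N \<theta> \<phi> s * complex_of_real (cos (real (N + 1) * \<phi>)))) = 0"
    (is "(\<Sum>s\<in>UNIV. ?T s) = 0")
proof (cases "sin (real (N + 1) * \<phi>) = 0")
  case True
  then show ?thesis by (simp add: disp_coeff_def)
next
  case False
  define C where "C = cos (real (N + 1) * \<phi>)"
  define S where "S = sin (real (N + 1) * \<phi>)"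
  have "complex_of_real S * ?T s = complex_of_real (2 * cos (\<theta> $ s) - 2 * C)" for s
  proof -
    have "complex_of_real S * ?T s = (cis (\<theta> $ s) - complex_of_real C)
        + cis (- \<theta> $ s) * (complex_of_real (S\<^sup>2) - complex_of_real C * (cis (\<theta> $ s) - complex_of_real C))"
      unfolding disp_coeff_def C_def[symmetric] S_def[symmetric] using False
      by (simp add: S_def field_simps power2_eq_square)
    also have "\<dots> = cis (\<theta> $ s) + cis (- \<theta> $ s) * complex_of_real (S\<^sup>2 + C\<^sup>2) - 2 * complex_of_real C"
      by (simp add: algebra_simps power2_eq_square cis_mult)
    also have "\<dots> = complex_of_real (2 * cos (\<theta> $ s) - 2 * C)"
      by (simp add: C_def S_def complex_eq_iff)
    finally show ?thesis .
  qed
  then have "complex_of_real S * (\<Sum>s\<in>UNIV. ?T s)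
      = complex_of_real (2 * (\<Sum>s\<in>UNIV. cos (\<theta> $ s)) - 2 * real CARD('d) * C)"
    by (simp add: sum_distrib_left sum_subtractf)
  then show ?thesis using dispersion False by (simp add: C_def S_def)
qed

lemma disp_eigvec_node_sum:
  "(\<Sum>s\<in>UNIV. disp_eigvec N \<theta> \<phi> (Some (s, 1)) + cis (- \<theta> $ s) * disp_eigvec N \<theta> \<phi> (Some (s, N)))
     = complex_of_real (2 * real CARD('d) * cos \<phi>)"
  using sum_disp_edge_defect
  unfolding disp_eigvec_edge_ends by (simp add: sum.distrib sum_distrib_left[symmetric])

lemma disp_eigvec_eig:
  assumes "N \<ge> 1"
  shows "eigvec (sub_adj N) \<theta> (fund_verts N) (1 - cos \<phi>) (disp_eigvec N \<theta> \<phi>)"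
proof (rule eigvec_sub_adj_trig[OF assms, where a = 1 and Q = "disp_coeff N \<theta> \<phi>"])
  show "1 * complex_of_real (cos (real (N + 1) * \<phi>)) + disp_coeff N \<theta> \<phi> s * complex_of_real (sin (real (N + 1) * \<phi>))
      = cis (\<theta> $ s) * 1" for s
    using disp_coeff_far_end[of s] by simp
  show "(\<Sum>s\<in>UNIV. disp_eigvec N \<theta> \<phi> (Some (s, 1)) + cis (- \<theta> $ s) * disp_eigvec N \<theta> \<phi> (Some (s, N)))
      = complex_of_real (2 * real CARD('d) * cos \<phi>) * 1"
    using disp_eigvec_node_sum by simp
qed (simp_all add: disp_eigvec_def)

end

text \<open>Eigenfunctions for the threshold eigenvalues that vanish at the lattice vertex: the
  j-th Dirichlet mode of each edge, with edge weights c annihilating the boundary terms.\<close>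

definition dirichlet_eigvec :: "nat \<Rightarrow> nat \<Rightarrow> ('d \<Rightarrow> complex) \<Rightarrow> ('d \<times> nat) option \<Rightarrow> complex" where
  "dirichlet_eigvec N j c b = (case b of None \<Rightarrow> 0
     | Some (s, k) \<Rightarrow> c s * complex_of_real (sin (real k * (real j * pi / real (N + 1)))))"

lemma dirichlet_eigvec_eig:
  fixes \<theta> :: "real^'d::finite" and c :: "'d \<Rightarrow> complex"
  assumes N: "N \<ge> 1" and weights: "(\<Sum>s\<in>UNIV. c s * (1 - (-1) ^ j * cis (- \<theta> $ s))) = 0"
  shows "eigvec (sub_adj N) \<theta> (fund_verts N) (threshold N j) (dirichlet_eigvec N j c)"
proof -
  define \<phi> where "\<phi> = real j * pi / real (N + 1)"
  have angle: "real (N + 1) * \<phi> = real j * pi" unfolding \<phi>_def by (simp del: of_nat_Suc)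
  have edge: "dirichlet_eigvec N j c (Some (s, k)) = 0 * complex_of_real (cos (real k * \<phi>))
      + c s * complex_of_real (sin (real k * \<phi>))" for s k
    by (simp add: dirichlet_eigvec_def \<phi>_def)
  have far_end: "sin (real (N + 1) * \<phi>) = 0" unfolding angle by simp
  have "real N * \<phi> = real j * pi - \<phi>" using angle by (simp add: algebra_simps)
  then have sin_N: "sin (real N * \<phi>) = - ((-1) ^ j * sin \<phi>)" by (simp add: sin_diff)
  have "(\<Sum>s\<in>UNIV. dirichlet_eigvec N j c (Some (s, 1)) + cis (- \<theta> $ s) * dirichlet_eigvec N j c (Some (s, N)))
      = (\<Sum>s\<in>UNIV. complex_of_real (sin \<phi>) * (c s * (1 - (-1) ^ j * cis (- \<theta> $ s))))"
  proof (rule sum.cong)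
    fix s
    have "dirichlet_eigvec N j c (Some (s, 1)) = c s * complex_of_real (sin \<phi>)"
      "dirichlet_eigvec N j c (Some (s, N)) = c s * complex_of_real (- ((-1) ^ j * sin \<phi>))"
      using sin_N by (simp_all add: edge)
    then show "dirichlet_eigvec N j c (Some (s, 1)) + cis (- \<theta> $ s) * dirichlet_eigvec N j c (Some (s, N))
        = complex_of_real (sin \<phi>) * (c s * (1 - (-1) ^ j * cis (- \<theta> $ s)))"
      by (simp add: algebra_simps)
  qed simp
  also have "\<dots> = 0" using weights by (simp add: sum_distrib_left[symmetric])
  finally have node_sum: "(\<Sum>s\<in>UNIV. dirichlet_eigvec N j c (Some (s, 1))
      + cis (- \<theta> $ s) * dirichlet_eigvec N j c (Some (s, N))) = complex_of_real (2 * real CARD('d) * cos \<phi>) * 0"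
    by simp
  have "eigvec (sub_adj N) \<theta> (fund_verts N) (1 - cos \<phi>) (dirichlet_eigvec N j c)"
    by (rule eigvec_sub_adj_trig[OF N _ edge _ node_sum]) (use far_end in \<open>simp_all add: dirichlet_eigvec_def\<close>)
  then show ?thesis by (simp add: threshold_def \<phi>_def)
qed

lemma lin_indep_on_dirichlet_eigvecs:
  assumes j: "1 \<le> j" "j \<le> N" and cs: "lin_indep_on UNIV m cs"
  shows "lin_indep_on (fund_verts N) m (\<lambda>i. dirichlet_eigvec N j (cs i))"
  unfolding lin_indep_on_def
proof (intro allI impI)
  fix a k assume comb: "\<forall>b\<in>fund_verts N. (\<Sum>i<m. a i * dirichlet_eigvec N j (cs i) b) = 0" and k: "k < m"
  have "0 < real j * pi / real (N + 1)" "real j * pi / real (N + 1) < pi"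
    using j by (simp_all add: divide_less_eq del: of_nat_Suc)
  then have sin_pos: "sin (real j * pi / real (N + 1)) > 0" by (rule sin_gt_zero)
  have "(\<Sum>i<m. a i * cs i s) = 0" for s
  proof -
    have "Some (s, 1) \<in> fund_verts N" using j by (auto simp: mem_fund_verts)
    from comb[rule_format, OF this]
    have "(\<Sum>i<m. a i * cs i s) * complex_of_real (sin (real j * pi / real (N + 1))) = 0"
      by (simp add: dirichlet_eigvec_def sum_distrib_right mult.assoc)
    then show ?thesis using sin_pos by simp
  qed
  then show "a k = 0" using lin_indep_onD[OF cs _ k] by simp
qed

context
  fixes \<theta> :: "real^'d::finite" and N :: nat
  assumes N: "N \<ge> 1"
begin

interpretation local_fiber_op "sub_adj N" \<theta> "fund_verts N"
  by (rule local_fiber_op_sub_adj[OF N])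

lemma eigmult_ge_disp:
  assumes "(\<Sum>s\<in>UNIV. cos (\<theta> $ s)) = real CARD('d) * cos (real (N + 1) * \<phi>)"
  shows "1 \<le> eigmult (sub_adj N) (fund_verts N) \<theta> (1 - cos \<phi>)"
proof (rule eigmult_ge)
  show "eigfam (sub_adj N) \<theta> (fund_verts N) (1 - cos \<phi>) 1 (\<lambda>_. disp_eigvec N \<theta> \<phi>)"
    unfolding eigfam_def lin_indep_on_one_iff
    using disp_eigvec_eig[OF assms N] by (force simp: mem_fund_verts disp_eigvec_def)
qed

context
  fixes j m :: nat and cs :: "nat \<Rightarrow> 'd \<Rightarrow> complex"
  assumes j: "1 \<le> j" "j \<le> N" and cs: "lin_indep_on UNIV m cs"
    and weights: "\<forall>i<m. (\<Sum>s\<in>UNIV. cs i s * (1 - (-1) ^ j * cis (- \<theta> $ s))) = 0"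
begin

lemma eigmult_ge_dirichlet: "m \<le> eigmult (sub_adj N) (fund_verts N) \<theta> (threshold N j)"
proof (rule eigmult_ge)
  show "eigfam (sub_adj N) \<theta> (fund_verts N) (threshold N j) m (\<lambda>i. dirichlet_eigvec N j (cs i))"
    unfolding eigfam_def using dirichlet_eigvec_eig[OF N] weights lin_indep_on_dirichlet_eigvecs[OF j cs]
    by blast
qed

text \<open>At the band edges, where all cos (\<theta> $ s) equal (-1)^j, the dispersive
  eigenfunction adds one more eigenfunction, independent since it does not vanish at the
  lattice vertex.\<close>

lemma eigmult_ge_dirichlet_Suc:
  assumes "(\<Sum>s\<in>UNIV. cos (\<theta> $ s)) = real CARD('d) * (-1) ^ j"
  shows "m + 1 \<le> eigmult (sub_adj N) (fund_verts N) \<theta> (threshold N j)"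
proof (rule eigmult_ge)
  define \<phi> where "\<phi> = real j * pi / real (N + 1)"
  have "real (N + 1) * \<phi> = real j * pi" unfolding \<phi>_def by (simp del: of_nat_Suc)
  then have disp: "eigvec (sub_adj N) \<theta> (fund_verts N) (threshold N j) (disp_eigvec N \<theta> \<phi>)"
    using disp_eigvec_eig[of \<theta> N \<phi>] N assms by (simp add: threshold_def \<phi>_def)
  define fs where "fs i = (if i < m then dirichlet_eigvec N j (cs i) else disp_eigvec N \<theta> \<phi>)" for i
  show "eigfam (sub_adj N) \<theta> (fund_verts N) (threshold N j) (m + 1) fs"
    unfolding eigfam_def
  proof
    show "\<forall>i<m + 1. eigvec (sub_adj N) \<theta> (fund_verts N) (threshold N j) (fs i)"
      using dirichlet_eigvec_eig[OF N] weights disp by (auto simp: fs_def)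
    show "lin_indep_on (fund_verts N) (m + 1) fs"
      unfolding lin_indep_on_def
    proof (intro allI impI)
      fix a k assume comb: "\<forall>b\<in>fund_verts N. (\<Sum>i<m + 1. a i * fs i b) = 0" and k: "k < m + 1"
      have "(\<Sum>i<m + 1. a i * fs i None) = a m * complex_of_real (sqrt CARD('d))"
        by (simp add: fs_def dirichlet_eigvec_def disp_eigvec_def)
      then have am: "a m = 0" using comb by (simp add: mem_fund_verts)
      then have "\<forall>b\<in>fund_verts N. (\<Sum>i<m. a i * dirichlet_eigvec N j (cs i) b) = 0"
        using comb by (simp add: fs_def)
      then have "\<forall>i<m. a i = 0" using lin_indep_onD[OF lin_indep_on_dirichlet_eigvecs[OF j cs]] by blast
      then show "a k = 0" using am k by (auto simp: less_Suc_eq)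
    qed
  qed
qed

end

end

lemma lin_indep_on_unit_funs: "\<exists>cs :: nat \<Rightarrow> 'd::finite \<Rightarrow> complex. lin_indep_on UNIV CARD('d) cs"
proof -
  obtain e where e: "bij_betw e {..<CARD('d)} (UNIV :: 'd set)"
    using ex_bij_betw_nat_finite[of "UNIV :: 'd set"] by (auto simp: atLeast0LessThan)
  then have inj: "inj_on e {..<CARD('d)}" by (simp add: bij_betw_def)
  have "lin_indep_on UNIV CARD('d) (\<lambda>i. unit_fun (e i))"
    unfolding lin_indep_on_def
  proof (intro allI impI)
    fix a :: "nat \<Rightarrow> complex" and i
    assume comb: "\<forall>s\<in>UNIV. (\<Sum>i<CARD('d). a i * unit_fun (e i) s) = 0" and i: "i < CARD('d)"
    have "(\<Sum>k<CARD('d). a k * unit_fun (e k) (e i)) = (\<Sum>k<CARD('d). if k = i then a i else 0)"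
      by (rule sum.cong) (use inj i in \<open>auto simp: unit_fun_def inj_on_def\<close>)
    then show "a i = 0" using comb i by simp
  qed
  then show ?thesis by blast
qed

text \<open>Eliminate a coordinate s0 with w s0 \<noteq> 0.\<close>

lemma lin_indep_on_annihilators:
  fixes w :: "'d::finite \<Rightarrow> complex"
  assumes w0: "w s0 \<noteq> 0"
  obtains cs where "lin_indep_on UNIV (CARD('d) - 1) cs"
    and "\<forall>i < CARD('d) - 1. (\<Sum>s\<in>UNIV. cs i s * w s) = 0"
proof -
  obtain e where e: "bij_betw e {..<CARD('d) - 1} (UNIV - {s0})"
    using ex_bij_betw_nat_finite[of "UNIV - {s0}"] by (auto simp: card_Diff_singleton atLeast0LessThan)
  then have inj: "inj_on e {..<CARD('d) - 1}" by (simp add: bij_betw_def)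
  have ne: "e i \<noteq> s0" if "i < CARD('d) - 1" for i using e that by (auto simp: bij_betw_def)
  define cs where "cs i s = (if s = e i then 1 else if s = s0 then - w (e i) / w s0 else 0)" for i s
  have "(\<Sum>s\<in>UNIV. cs i s * w s) = 0" if i: "i < CARD('d) - 1" for i
  proof -
    have "(\<Sum>s\<in>UNIV. cs i s * w s) = (\<Sum>s\<in>UNIV. (if s = e i then w (e i) else 0) + (if s = s0 then - w (e i) else 0))"
      by (rule sum.cong) (use ne[OF i] w0 in \<open>auto simp: cs_def\<close>)
    then show ?thesis by (simp add: sum.distrib)
  qed
  moreover have "lin_indep_on UNIV (CARD('d) - 1) cs"
    unfolding lin_indep_on_def
  proof (intro allI impI)
    fix a :: "nat \<Rightarrow> complex" and i
    assume comb: "\<forall>s\<in>UNIV. (\<Sum>i<CARD('d) - 1. a i * cs i s) = 0" and i: "i < CARD('d) - 1"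
    have "(\<Sum>k<CARD('d) - 1. a k * cs k (e i)) = (\<Sum>k<CARD('d) - 1. if k = i then a i else 0)"
      by (rule sum.cong) (use inj i ne[OF i] in \<open>auto simp: cs_def inj_on_def\<close>)
    then show "a i = 0" using comb i by simp
  qed
  ultimately show ?thesis using that by blast
qed

section \<open>Exact multiplicities\<close>

definition mean_cos :: "real^'d::finite \<Rightarrow> real" where
  "mean_cos \<theta> = (\<Sum>s\<in>UNIV. cos (\<theta> $ s)) / real CARD('d)"

lemma sum_cos_eq_mean_cos: "(\<Sum>s\<in>UNIV. cos (\<theta> $ s)) = real CARD('d) * mean_cos (\<theta>::real^'d::finite)"
  by (simp add: mean_cos_def)

lemma mean_cos_bounds: "-1 \<le> mean_cos (\<theta>::real^'d::finite) \<and> mean_cos \<theta> \<le> 1"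
proof -
  have "(\<Sum>s\<in>UNIV. cos (\<theta> $ s)) \<le> (\<Sum>s\<in>(UNIV::'d set). 1)"
    and "(\<Sum>s\<in>(UNIV::'d set). -1) \<le> (\<Sum>s\<in>UNIV. cos (\<theta> $ s))"
    by (rule sum_mono; simp)+
  then show ?thesis by (auto simp: mean_cos_def field_simps)
qed

lemma mean_cos_eq_sign_iff:
  "mean_cos (\<theta>::real^'d::finite) = (-1) ^ j \<longleftrightarrow> (\<forall>s. 1 - (-1) ^ j * cis (- \<theta> $ s) = 0)"
proof
  assume mean: "mean_cos \<theta> = (-1) ^ j"
  have sign: "(-1::real) ^ j = 1 \<or> (-1::real) ^ j = -1" by (simp add: minus_one_power_iff)
  show "\<forall>s. 1 - (-1) ^ j * cis (- \<theta> $ s) = 0"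
  proof
    fix s
    have "cos (- \<theta> $ s) = (-1) ^ j"
      using cos_eq_of_sum_cos_extremal[OF _ sign] mean sum_cos_eq_mean_cos[of \<theta>] by simp
    then have "cis (- \<theta> $ s) = (-1) ^ j" using cis_eq_of_cos_extremal[OF _ sign] by simp
    then show "1 - (-1) ^ j * cis (- \<theta> $ s) = 0" by (simp flip: power_mult_distrib)
  qed
next
  assume all: "\<forall>s. 1 - (-1) ^ j * cis (- \<theta> $ s) = 0"
  have "cos (\<theta> $ s) = (-1) ^ j" for s
  proof -
    have "1 = (-1) ^ j * cis (- \<theta> $ s)"
      using all[rule_format, of s] by (simp only: right_minus_eq)
    then have "(-1) ^ j * ((-1) ^ j * cis (- \<theta> $ s)) = (-1) ^ j" by simp
    then have "cis (- \<theta> $ s) = (-1) ^ j" by (simp flip: mult.assoc power_mult_distrib)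
    then have "Re (cis (- \<theta> $ s)) = Re ((-1) ^ j)" by simp
    then show ?thesis by (simp add: minus_one_power_iff split: if_splits)
  qed
  then show "mean_cos \<theta> = (-1) ^ j" by (simp add: mean_cos_def)
qed

definition disp_band :: "nat \<Rightarrow> real^'d::finite \<Rightarrow> nat \<Rightarrow> real" where
  "disp_band N \<theta> i = disp_eig N i (mean_cos \<theta>)"

definition thresholds :: "nat \<Rightarrow> real set" where
  "thresholds N = threshold N ` {1..N}"

definition eig_values :: "nat \<Rightarrow> real^'d::finite \<Rightarrow> real set" where
  "eig_values N \<theta> = disp_band N \<theta> ` {..N} \<union> thresholds N"

definition mult_count :: "nat \<Rightarrow> real^'d::finite \<Rightarrow> real \<Rightarrow> nat" where
  "mult_count N \<theta> x = card {i\<in>{..N}. disp_band N \<theta> i = x} + (if x \<in> thresholds N then CARD('d) - 1 else 0)"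

lemma disp_band_bounds: "i \<le> N \<Longrightarrow> threshold N i \<le> disp_band N \<theta> i \<and> disp_band N \<theta> i \<le> threshold N (i + 1)"
  unfolding disp_band_def using disp_eig_bounds mean_cos_bounds by blast

lemma disp_band_eq_threshold:
  "i \<le> N \<Longrightarrow> j \<le> N + 1 \<Longrightarrow> disp_band N \<theta> i = threshold N j \<Longrightarrow> mean_cos \<theta> = (-1) ^ j \<and> (j = i \<or> j = i + 1)"
  unfolding disp_band_def using disp_eig_eq_threshold mean_cos_bounds by blast

lemma disp_band_separated:
  "i < i' \<Longrightarrow> i' \<le> N \<Longrightarrow> disp_band N \<theta> i \<le> threshold N (i + 1) \<and> threshold N (i + 1) \<le> disp_band N \<theta> i'"
  using disp_band_bounds[of i N \<theta>] disp_band_bounds[of i' N \<theta>] threshold_le[of "i + 1" i' N] by auto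

lemma disp_band_mono: "i \<le> i' \<Longrightarrow> i' \<le> N \<Longrightarrow> disp_band N \<theta> i \<le> disp_band N \<theta> i'"
  using disp_band_separated[of i i' N \<theta>] by (cases "i = i'") auto

lemma card_disp_band_fiber_le_one:
  assumes "x \<notin> thresholds N"
  shows "card {i\<in>{..N}. disp_band N \<theta> i = x} \<le> 1"
proof -
  have "i = i'" if i: "i \<le> N" "i' \<le> N" "disp_band N \<theta> i = x" "disp_band N \<theta> i' = x" for i i'
  proof (rule ccontr)
    assume "i \<noteq> i'"
    then have "i < i' \<or> i' < i" by arith
    then obtain l l' where "l < l'" "l' \<le> N" "disp_band N \<theta> l = x" "disp_band N \<theta> l' = x"
      using i by blast
    then have "x = threshold N (l + 1)" "l + 1 \<in> {1..N}"
      using disp_band_separated[of l l' N \<theta>] by auto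
    with assms show False by (auto simp: thresholds_def)
  qed
  then show ?thesis by (auto simp: card_le_Suc0_iff_eq)
qed

lemma eigmult_disp_band_ge:
  fixes \<theta> :: "real^'d::finite"
  assumes "N \<ge> 1" "i \<le> N"
  shows "1 \<le> eigmult (sub_adj N) (fund_verts N) \<theta> (disp_band N \<theta> i)"
proof -
  have "(\<Sum>s\<in>UNIV. cos (\<theta> $ s)) = real CARD('d) * cos (real (N + 1) * disp_angle N i (mean_cos \<theta>))"
    using cos_disp_angle mean_cos_bounds sum_cos_eq_mean_cos by metis
  from eigmult_ge_disp[OF assms(1) this] show ?thesis by (simp add: disp_band_def disp_eig_def)
qed

lemma mult_count_threshold_le_eigmult:
  fixes \<theta> :: "real^'d::finite"
  assumes N: "N \<ge> 1" and j: "1 \<le> j" "j \<le> N"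
  shows "mult_count N \<theta> (threshold N j) \<le> eigmult (sub_adj N) (fund_verts N) \<theta> (threshold N j)"
proof (cases "mean_cos \<theta> = (-1) ^ j")
  case True
  then have weights: "\<forall>s. 1 - (-1) ^ j * cis (- \<theta> $ s) = 0" by (rule mean_cos_eq_sign_iff[THEN iffD1])
  obtain cs :: "nat \<Rightarrow> 'd \<Rightarrow> complex" where "lin_indep_on UNIV CARD('d) cs"
    using lin_indep_on_unit_funs by blast
  from eigmult_ge_dirichlet_Suc[OF N j this] weights True
  have eig: "CARD('d) + 1 \<le> eigmult (sub_adj N) (fund_verts N) \<theta> (threshold N j)"
    by (simp add: sum_cos_eq_mean_cos)
  have "{i\<in>{..N}. disp_band N \<theta> i = threshold N j} \<subseteq> {j - 1, j}"
    using disp_band_eq_threshold[of _ N j \<theta>] j by force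
  then have "card {i\<in>{..N}. disp_band N \<theta> i = threshold N j} \<le> card {j - 1, j}"
    by (rule card_mono[rotated]) simp
  also have "\<dots> \<le> 2" by (simp add: card_insert_if)
  finally show ?thesis using eig j by (simp add: mult_count_def thresholds_def)
next
  case False
  then have no_disp: "{i\<in>{..N}. disp_band N \<theta> i = threshold N j} = {}"
    using disp_band_eq_threshold[of _ N j \<theta>] j by auto
  obtain s0 where "1 - (-1) ^ j * cis (- \<theta> $ s0) \<noteq> 0"
    using False mean_cos_eq_sign_iff[of \<theta> j] by blast
  then obtain cs where "lin_indep_on UNIV (CARD('d) - 1) cs"
    and "\<forall>i < CARD('d) - 1. (\<Sum>s\<in>UNIV. cs i s * (1 - (-1) ^ j * cis (- \<theta> $ s))) = 0"
    by (rule lin_indep_on_annihilators)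
  then have "CARD('d) - 1 \<le> eigmult (sub_adj N) (fund_verts N) \<theta> (threshold N j)"
    by (rule eigmult_ge_dirichlet[OF N j])
  then show ?thesis unfolding mult_count_def no_disp using j by (simp add: thresholds_def)
qed

lemma mult_count_le_eigmult:
  fixes \<theta> :: "real^'d::finite"
  assumes N: "N \<ge> 1"
  shows "mult_count N \<theta> x \<le> eigmult (sub_adj N) (fund_verts N) \<theta> x"
proof (cases "x \<in> thresholds N")
  case True
  then show ?thesis using mult_count_threshold_le_eigmult[OF N] by (auto simp: thresholds_def)
next
  case False
  show ?thesis
  proof (cases "{i\<in>{..N}. disp_band N \<theta> i = x} = {}")
    case True
    then show ?thesis unfolding mult_count_def True using False by simp
  next
    case nonempty: False
    then obtain i where "i \<le> N" "disp_band N \<theta> i = x" by blast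
    then show ?thesis
      using eigmult_disp_band_ge[OF N, of i \<theta>] card_disp_band_fiber_le_one[OF False, of \<theta>] False
      by (simp add: mult_count_def)
  qed
qed

lemma sum_card_fibers:
  assumes "finite I" "finite Y"
  shows "(\<Sum>y\<in>Y. card {i\<in>I. f i = y}) = card {i\<in>I. f i \<in> Y}"
proof -
  have "{i\<in>I. f i \<in> Y} = (\<Union>y\<in>Y. {i\<in>I. f i = y})" by auto
  moreover have "card (\<Union>y\<in>Y. {i\<in>I. f i = y}) = (\<Sum>y\<in>Y. card {i\<in>I. f i = y})"
    by (rule card_UN_disjoint) (use assms in auto)
  ultimately show ?thesis by simp
qed

lemma finite_eig_values: "finite (eig_values N \<theta>)"
  by (simp add: eig_values_def thresholds_def)

lemma card_thresholds: "card (thresholds N) = N"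
proof -
  have "inj_on (threshold N) {1..N}" by (rule inj_on_subset[OF inj_on_threshold]) auto
  then show ?thesis unfolding thresholds_def by (simp add: card_image)
qed

lemma mult_count_outside: "x \<notin> eig_values N \<theta> \<Longrightarrow> mult_count N \<theta> x = 0"
  unfolding mult_count_def eig_values_def by auto

lemma sum_threshold_mult:
  assumes "finite Y"
  shows "(\<Sum>x\<in>Y. if x \<in> thresholds N then m else 0) = m * card (Y \<inter> thresholds N)"
  using sum.inter_restrict[OF assms, where B = "thresholds N" and g = "\<lambda>_. m"] by (simp add: mult.commute)

lemma sum_mult_count: "(\<Sum>x\<in>eig_values N (\<theta>::real^'d::finite). mult_count N \<theta> x) = CARD('d) * N + 1"
proof -
  have "(\<Sum>x\<in>eig_values N \<theta>. card {i\<in>{..N}. disp_band N \<theta> i = x}) = card {i\<in>{..N}. disp_band N \<theta> i \<in> eig_values N \<theta>}"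
    by (rule sum_card_fibers) (simp_all add: finite_eig_values)
  also have "{i\<in>{..N}. disp_band N \<theta> i \<in> eig_values N \<theta>} = {..N}" by (auto simp: eig_values_def)
  finally have "(\<Sum>x\<in>eig_values N \<theta>. mult_count N \<theta> x) = card {..N} + (CARD('d) - 1) * N"
    unfolding mult_count_def sum.distrib sum_threshold_mult[OF finite_eig_values]
    by (simp add: eig_values_def Int_absorb1 card_thresholds)
  also have "\<dots> = CARD('d) * N + 1"
    using Suc_le_eq[of 0 "CARD('d)"] by (simp add: algebra_simps diff_mult_distrib)
  finally show ?thesis .
qed

lemma sum_le_sum_imp_eq:
  fixes f g :: "'a \<Rightarrow> nat"
  assumes "finite M" "\<forall>y\<in>M. f y \<le> g y" "sum g M \<le> sum f M" "y \<in> M"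
  shows "f y = g y"
  using sum_strict_mono_ex1[OF assms(1,2)] assms(2-4) by fastforce

text \<open>The eigenfunctions found so far already exhaust the dimension CARD('d) * N + 1,
  so the lower bounds are the exact multiplicities.\<close>

lemma eigmult_eq_mult_count:
  fixes \<theta> :: "real^'d::finite"
  assumes N: "N \<ge> 1"
  shows "eigmult (sub_adj N) (fund_verts N) \<theta> x = mult_count N \<theta> x"
proof -
  interpret local_fiber_op "sub_adj N" \<theta> "fund_verts N" by (rule local_fiber_op_sub_adj[OF N])
  let ?M = "insert x (eig_values N \<theta>)"
  have M: "finite ?M" by (simp add: finite_eig_values)
  have "(\<Sum>y\<in>?M. em y) \<le> card (fund_verts N :: ('d \<times> nat) option set)"
    by (rule sum_eigmult_le_card[OF M])
  also have "\<dots> = (\<Sum>y\<in>eig_values N \<theta>. mult_count N \<theta> y)" by (simp add: card_fund_verts sum_mult_count)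
  also have "\<dots> = (\<Sum>y\<in>?M. mult_count N \<theta> y)"
    by (rule sum.mono_neutral_left) (auto simp: finite_eig_values mult_count_outside)
  finally show ?thesis
    using sum_le_sum_imp_eq[OF M _ _ insertI1] mult_count_le_eigmult[OF N] by (metis (no_types, lifting))
qed

section \<open>Band functions\<close>

definition count_below :: "nat \<Rightarrow> real^'d::finite \<Rightarrow> real \<Rightarrow> nat" where
  "count_below N \<theta> lam = card {i\<in>{..N}. disp_band N \<theta> i \<le> lam}
     + (CARD('d) - 1) * card {j\<in>{1..N}. threshold N j \<le> lam}"

lemma count_below_mono: "lam \<le> lam' \<Longrightarrow> count_below N \<theta> lam \<le> count_below N \<theta> lam'"
  unfolding count_below_def by (intro add_mono mult_left_mono card_mono) auto

lemma count_below_ge: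
  assumes "{..a} \<subseteq> {i\<in>{..N}. disp_band N \<theta> i \<le> lam}" "{1..b} \<subseteq> {j\<in>{1..N}. threshold N j \<le> lam}"
  shows "(a + 1) + (CARD('d) - 1) * b \<le> count_below N (\<theta>::real^'d::finite) lam"
  using card_mono[OF _ assms(1)] card_mono[OF _ assms(2)] unfolding count_below_def
  by (intro add_mono mult_left_mono) auto

lemma count_below_le:
  assumes "{i\<in>{..N}. disp_band N \<theta> i \<le> lam} \<subseteq> {..<a}" "{j\<in>{1..N}. threshold N j \<le> lam} \<subseteq> {1..b}"
  shows "count_below N (\<theta>::real^'d::finite) lam \<le> a + (CARD('d) - 1) * b"
  using card_mono[OF _ assms(1)] card_mono[OF _ assms(2)] unfolding count_below_def
  by (intro add_mono mult_left_mono) auto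

lemma add_pred_mult: "n \<ge> 1 \<Longrightarrow> x + (n - 1) * x = n * (x::nat)"
  by (simp add: diff_mult_distrib)

lemma count_below_disp_band_ge:
  fixes \<theta> :: "real^'d::finite"
  assumes q: "q \<le> N"
  shows "q * CARD('d) + 1 \<le> count_below N \<theta> (disp_band N \<theta> q)"
proof -
  have "{..q} \<subseteq> {i\<in>{..N}. disp_band N \<theta> i \<le> disp_band N \<theta> q}"
    using q disp_band_mono[of _ q N \<theta>] by auto
  moreover have "{1..q} \<subseteq> {j\<in>{1..N}. threshold N j \<le> disp_band N \<theta> q}"
  proof
    fix j assume j: "j \<in> {1..q}"
    have "threshold N j \<le> threshold N q" using j q by (intro threshold_le) auto
    also have "\<dots> \<le> disp_band N \<theta> q" using disp_band_bounds[OF q] by blast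
    finally show "j \<in> {j\<in>{1..N}. threshold N j \<le> disp_band N \<theta> q}" using j q by simp
  qed
  moreover have "(q + 1) + (CARD('d) - 1) * q = q * CARD('d) + 1"
    using add_pred_mult[of "CARD('d)" q] by (simp add: Suc_le_eq mult.commute)
  ultimately show ?thesis
    using count_below_ge[of q N \<theta> "disp_band N \<theta> q" q] by simp
qed

lemma count_below_lt_disp_band:
  fixes \<theta> :: "real^'d::finite"
  assumes q: "q \<le> N" and lam: "lam < disp_band N \<theta> q"
  shows "count_below N \<theta> lam \<le> q * CARD('d)"
proof -
  have "{i\<in>{..N}. disp_band N \<theta> i \<le> lam} \<subseteq> {..<q}"
  proof
    fix i assume i: "i \<in> {i\<in>{..N}. disp_band N \<theta> i \<le> lam}"
    have "\<not> q \<le> i"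
    proof
      assume "q \<le> i"
      then have "disp_band N \<theta> q \<le> disp_band N \<theta> i" using i by (intro disp_band_mono) auto
      with i lam show False by simp
    qed
    then show "i \<in> {..<q}" by simp
  qed
  moreover have "{j\<in>{1..N}. threshold N j \<le> lam} \<subseteq> {1..q}"
  proof
    fix j assume j: "j \<in> {j\<in>{1..N}. threshold N j \<le> lam}"
    have "\<not> q + 1 \<le> j"
    proof
      assume "q + 1 \<le> j"
      then have "threshold N (q + 1) \<le> threshold N j" using j by (intro threshold_le) auto
      moreover have "disp_band N \<theta> q \<le> threshold N (q + 1)" using disp_band_bounds[OF q] by blast
      ultimately show False using j lam by simp
    qed
    then show "j \<in> {1..q}" using j by simp
  qed
  moreover have "q + (CARD('d) - 1) * q = q * CARD('d)"
    using add_pred_mult[of "CARD('d)" q] by (simp add: Suc_le_eq mult.commute)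
  ultimately show ?thesis
    using count_below_le[of N \<theta> lam q q] by simp
qed

lemma count_below_threshold_ge:
  fixes \<theta> :: "real^'d::finite"
  assumes q: "q + 1 \<le> N"
  shows "(q + 1) * CARD('d) \<le> count_below N \<theta> (threshold N (q + 1))"
proof -
  have "{..q} \<subseteq> {i\<in>{..N}. disp_band N \<theta> i \<le> threshold N (q + 1)}"
  proof
    fix i assume i: "i \<in> {..q}"
    have "disp_band N \<theta> i \<le> threshold N (i + 1)" using disp_band_bounds[of i N \<theta>] i q by simp
    also have "\<dots> \<le> threshold N (q + 1)" using i q by (intro threshold_le) auto
    finally show "i \<in> {i\<in>{..N}. disp_band N \<theta> i \<le> threshold N (q + 1)}" using i q by simp
  qed
  moreover have "{1..q + 1} \<subseteq> {j\<in>{1..N}. threshold N j \<le> threshold N (q + 1)}"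
    using q threshold_le[of _ "q + 1" N] by auto
  moreover have "(q + 1) + (CARD('d) - 1) * (q + 1) = (q + 1) * CARD('d)"
    using add_pred_mult[of "CARD('d)" "q + 1"] by (simp add: Suc_le_eq mult.commute)
  ultimately show ?thesis
    using count_below_ge[of q N \<theta> "threshold N (q + 1)" "q + 1"] by simp
qed

lemma count_below_lt_threshold:
  fixes \<theta> :: "real^'d::finite"
  assumes lam: "lam < threshold N (q + 1)"
  shows "count_below N \<theta> lam \<le> q * CARD('d) + 1"
proof -
  have "{i\<in>{..N}. disp_band N \<theta> i \<le> lam} \<subseteq> {..<q + 1}"
  proof
    fix i assume i: "i \<in> {i\<in>{..N}. disp_band N \<theta> i \<le> lam}"
    have "\<not> q + 1 \<le> i"
    proof
      assume "q + 1 \<le> i"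
      then have "threshold N (q + 1) \<le> threshold N i" using i by (intro threshold_le) auto
      moreover have "threshold N i \<le> disp_band N \<theta> i" using disp_band_bounds[of i N \<theta>] i by simp
      ultimately show False using i lam by simp
    qed
    then show "i \<in> {..<q + 1}" by simp
  qed
  moreover have "{j\<in>{1..N}. threshold N j \<le> lam} \<subseteq> {1..q}"
  proof
    fix j assume j: "j \<in> {j\<in>{1..N}. threshold N j \<le> lam}"
    have "\<not> q + 1 \<le> j"
    proof
      assume "q + 1 \<le> j"
      then have "threshold N (q + 1) \<le> threshold N j" using j by (intro threshold_le) auto
      then show False using j lam by simp
    qed
    then show "j \<in> {1..q}" using j by simp
  qed
  moreover have "(q + 1) + (CARD('d) - 1) * q = q * CARD('d) + 1"
    using add_pred_mult[of "CARD('d)" q] by (simp add: Suc_le_eq mult.commute)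
  ultimately show ?thesis
    using count_below_le[of N \<theta> lam "q + 1" q] by simp
qed

lemma mult_count_pos_iff:
  assumes "CARD('d::finite) \<ge> 2"
  shows "1 \<le> mult_count N (\<theta>::real^'d) x \<longleftrightarrow> x \<in> eig_values N \<theta>"
proof
  assume "1 \<le> mult_count N \<theta> x"
  then show "x \<in> eig_values N \<theta>" using mult_count_outside by fastforce
next
  assume x: "x \<in> eig_values N \<theta>"
  show "1 \<le> mult_count N \<theta> x"
  proof (cases "x \<in> thresholds N")
    case False
    then obtain i where "i \<le> N" "disp_band N \<theta> i = x" using x by (auto simp: eig_values_def)
    then have "{i\<in>{..N}. disp_band N \<theta> i = x} \<noteq> {}" by auto
    then show ?thesis using False by (simp add: mult_count_def Suc_le_eq card_gt_0_iff)
  qed (use assms in \<open>simp add: mult_count_def\<close>)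
qed

lemma eigcount_eq_count_below:
  fixes \<theta> :: "real^'d::finite"
  assumes N: "N \<ge> 1" and d: "CARD('d) \<ge> 2"
  shows "eigcount (sub_adj N) (fund_verts N) \<theta> lam = count_below N \<theta> lam"
proof -
  interpret local_fiber_op "sub_adj N" \<theta> "fund_verts N" by (rule local_fiber_op_sub_adj[OF N])
  let ?Y = "{mu\<in>eig_values N \<theta>. mu \<le> lam}"
  have Y: "finite ?Y" by (simp add: finite_eig_values)
  have "is_eig (sub_adj N) (fund_verts N) \<theta> mu \<longleftrightarrow> mu \<in> eig_values N \<theta>" for mu
    using is_eig_iff_eigmult[of mu] eigmult_eq_mult_count[OF N, of \<theta> mu] mult_count_pos_iff[OF d] by simp
  then have "eigcount (sub_adj N) (fund_verts N) \<theta> lam = (\<Sum>mu\<in>?Y. mult_count N \<theta> mu)"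
    unfolding eigcount_def by (intro sum.cong) (auto simp: eigmult_eq_mult_count[OF N])
  also have "\<dots> = (\<Sum>mu\<in>?Y. card {i\<in>{..N}. disp_band N \<theta> i = mu}) + (CARD('d) - 1) * card (?Y \<inter> thresholds N)"
    unfolding mult_count_def sum.distrib sum_threshold_mult[OF Y] ..
  also have "(\<Sum>mu\<in>?Y. card {i\<in>{..N}. disp_band N \<theta> i = mu}) = card {i\<in>{..N}. disp_band N \<theta> i \<in> ?Y}"
    by (rule sum_card_fibers) (simp_all add: Y)
  also have "{i\<in>{..N}. disp_band N \<theta> i \<in> ?Y} = {i\<in>{..N}. disp_band N \<theta> i \<le> lam}"
    by (auto simp: eig_values_def)
  also have "?Y \<inter> thresholds N = threshold N ` {j\<in>{1..N}. threshold N j \<le> lam}"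
    by (auto simp: eig_values_def thresholds_def)
  also have "card \<dots> = card {j\<in>{1..N}. threshold N j \<le> lam}"
    by (rule card_image, rule inj_on_subset[OF inj_on_threshold]) auto
  finally show ?thesis unfolding count_below_def .
qed

lemma Inf_level_set_eq:
  fixes F :: "real \<Rightarrow> nat"
  assumes "mono F" "n \<le> F mu" "\<And>lam. lam < mu \<Longrightarrow> F lam < n"
  shows "Inf {lam. n \<le> F lam} = mu"
proof -
  have "{lam. n \<le> F lam} = {mu..}"
    using assms by (auto simp: not_less[symmetric] intro: le_trans dest: monoD)
  then show ?thesis by simp
qed

lemma band_index_bounds:
  assumes "CARD('d::finite) \<ge> 2" "n \<in> {1..CARD('d) * N + 1}"
  shows "(n - 1) div CARD('d) \<le> N" and "(n - 1) mod CARD('d) \<noteq> 0 \<Longrightarrow> (n - 1) div CARD('d) + 1 \<le> N"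
proof -
  define q where "q = (n - 1) div CARD('d)"
  define r where "r = (n - 1) mod CARD('d)"
  have "n - 1 \<le> N * CARD('d)" using assms(2) by (auto simp: mult.commute)
  then have le: "q * CARD('d) + r \<le> N * CARD('d)"
    unfolding q_def r_def by simp
  then have "q * CARD('d) \<le> N * CARD('d)" by linarith
  then show "q \<le> N" by simp
  assume "r \<noteq> 0"
  with le have "q * CARD('d) < N * CARD('d)" by linarith
  then show "q + 1 \<le> N" by simp
qed

lemma band_sub_adj:
  fixes \<theta> :: "real^'d::finite"
  assumes N: "N \<ge> 1" and d: "CARD('d) \<ge> 2" and n: "n \<in> {1..CARD('d) * N + 1}"
  shows "band (sub_adj N) (fund_verts N) n \<theta> =
    (if (n - 1) mod CARD('d) = 0 then disp_band N \<theta> ((n - 1) div CARD('d))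
     else threshold N ((n - 1) div CARD('d) + 1))"
proof -
  define q where "q = (n - 1) div CARD('d)"
  define r where "r = (n - 1) mod CARD('d)"
  have nqr: "n = q * CARD('d) + r + 1" using n unfolding q_def r_def by simp
  have mono: "mono (count_below N \<theta>)" by (rule monoI) (rule count_below_mono)
  have "Inf {lam. n \<le> count_below N \<theta> lam} = (if r = 0 then disp_band N \<theta> q else threshold N (q + 1))"
  proof (cases "r = 0")
    case True
    have "q \<le> N" using band_index_bounds(1)[OF d n] by (simp add: q_def)
    then have "Inf {lam. n \<le> count_below N \<theta> lam} = disp_band N \<theta> q"
      using count_below_disp_band_ge[where \<theta> = \<theta>] count_below_lt_disp_band[where \<theta> = \<theta>] True nqr
      by (intro Inf_level_set_eq[OF mono]) (simp_all add: le_imp_less_Suc)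
    then show ?thesis using True by simp
  next
    case False
    have q1: "q + 1 \<le> N" using band_index_bounds(2)[OF d n] False by (simp add: q_def r_def)
    have "r < CARD('d)" using d by (simp add: r_def)
    then have "n \<le> count_below N \<theta> (threshold N (q + 1))"
      using nqr count_below_threshold_ge[where \<theta> = \<theta>, OF q1] by simp
    moreover have "count_below N \<theta> lam < n" if "lam < threshold N (q + 1)" for lam
      using count_below_lt_threshold[where \<theta> = \<theta>, OF that] False nqr by simp
    ultimately have "Inf {lam. n \<le> count_below N \<theta> lam} = threshold N (q + 1)"
      by (rule Inf_level_set_eq[OF mono])
    then show ?thesis using False by simp
  qed
  then show ?thesis
    unfolding band_def eigcount_eq_count_below[OF N d] q_def r_def by simp
qed

lemma degenerate_band_sub_adj_iff:
  assumes N: "N \<ge> 1" and d: "CARD('d::finite) \<ge> 2" and n: "n \<in> {1..CARD('d) * N + 1}"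
  shows "degenerate_band (sub_adj N :: 'd sv \<Rightarrow> 'd sv \<Rightarrow> bool) (fund_verts N) n \<longleftrightarrow> (n - 1) mod CARD('d) \<noteq> 0"
proof
  assume "degenerate_band (sub_adj N :: 'd sv \<Rightarrow> 'd sv \<Rightarrow> bool) (fund_verts N) n"
  then have const: "band (sub_adj N :: 'd sv \<Rightarrow> 'd sv \<Rightarrow> bool) (fund_verts N) n 0 =
      band (sub_adj N :: 'd sv \<Rightarrow> 'd sv \<Rightarrow> bool) (fund_verts N) n (\<chi> s. pi)"
    unfolding degenerate_band_def by auto
  show "(n - 1) mod CARD('d) \<noteq> 0"
  proof
    assume "(n - 1) mod CARD('d) = 0"
    then have "disp_eig N ((n - 1) div CARD('d)) 1 = disp_eig N ((n - 1) div CARD('d)) (-1)"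
      using const band_sub_adj[OF N d n] by (simp add: disp_band_def mean_cos_def)
    with disp_eig_nonconst band_index_bounds(1)[OF d n] show False by blast
  qed
qed (use band_sub_adj[OF N d n] in \<open>auto simp: degenerate_band_def\<close>)

section \<open>Spectra\<close>

lemma spec_eq_spec_ac_Un_spec_fb: "spec adj Vs = spec_ac adj Vs \<union> spec_fb adj Vs"
proof (intro set_eqI iffI)
  fix x assume "x \<in> spec adj Vs"
  then obtain n \<theta> where n: "n \<in> {1..card Vs}" "x = band adj Vs n \<theta>" unfolding spec_def by auto
  show "x \<in> spec_ac adj Vs \<union> spec_fb adj Vs"
  proof (cases "degenerate_band adj Vs n")
    case True
    then obtain lam where "\<forall>\<theta>. band adj Vs n \<theta> = lam" unfolding degenerate_band_def by blast
    then show ?thesis using n unfolding spec_fb_def by auto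
  qed (use n in \<open>auto simp: spec_ac_def\<close>)
next
  fix x assume "x \<in> spec_ac adj Vs \<union> spec_fb adj Vs"
  then show "x \<in> spec adj Vs" unfolding spec_def spec_ac_def spec_fb_def by (auto intro!: rangeI)
qed

lemma mean_cos_const: "-1 \<le> c \<Longrightarrow> c \<le> 1 \<Longrightarrow> mean_cos ((\<chi> s. arccos c)::real^'d::finite) = c"
  by (simp add: mean_cos_def)

lemma range_disp_band:
  assumes "q \<le> N"
  shows "range (\<lambda>\<theta>::real^'d::finite. disp_band N \<theta> q) = {threshold N q..threshold N (q + 1)}"
proof
  show "range (\<lambda>\<theta>::real^'d. disp_band N \<theta> q) \<subseteq> {threshold N q..threshold N (q + 1)}"
  proof
    fix x assume "x \<in> range (\<lambda>\<theta>::real^'d. disp_band N \<theta> q)"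
    then obtain \<theta> :: "real^'d" where "x = disp_band N \<theta> q" by blast
    then show "x \<in> {threshold N q..threshold N (q + 1)}" using disp_band_bounds[OF assms, of \<theta>] by simp
  qed
  show "{threshold N q..threshold N (q + 1)} \<subseteq> range (\<lambda>\<theta>::real^'d. disp_band N \<theta> q)"
  proof
    fix x assume "x \<in> {threshold N q..threshold N (q + 1)}"
    then obtain c where "-1 \<le> c" "c \<le> 1" "disp_eig N q c = x" using disp_eig_surj[OF assms] by blast
    then have "disp_band N ((\<chi> s. arccos c)::real^'d) q = x" by (simp add: disp_band_def mean_cos_const)
    then show "x \<in> range (\<lambda>\<theta>::real^'d. disp_band N \<theta> q)" by (metis rangeI)
  qed
qed

lemma spec_ac_sub_adj:
  assumes N: "N \<ge> 1" and d: "CARD('d::finite) \<ge> 2"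
  shows "spec_ac (sub_adj N :: 'd sv \<Rightarrow> 'd sv \<Rightarrow> bool) (fund_verts N) = {0..2}"
proof (intro set_eqI iffI)
  let ?A = "sub_adj N :: 'd sv \<Rightarrow> 'd sv \<Rightarrow> bool"
  fix x assume "x \<in> spec_ac ?A (fund_verts N)"
  then obtain n \<theta> where n: "n \<in> {1..CARD('d) * N + 1}" "\<not> degenerate_band ?A (fund_verts N) n"
    "x = band ?A (fund_verts N) n \<theta>"
    unfolding spec_ac_def card_fund_verts by auto
  define q where "q = (n - 1) div CARD('d)"
  have q: "q \<le> N" using band_index_bounds(1)[OF d n(1)] by (simp add: q_def)
  have "x = disp_band N \<theta> q"
    using n band_sub_adj[OF N d n(1)] degenerate_band_sub_adj_iff[OF N d n(1)] by (simp add: q_def)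
  then have "x \<in> (\<Union>q\<le>N. {threshold N q..threshold N (q + 1)})" using disp_band_bounds[OF q] q by auto
  then show "x \<in> {0..2}" using threshold_intervals_cover[of N] by blast
next
  let ?A = "sub_adj N :: 'd sv \<Rightarrow> 'd sv \<Rightarrow> bool"
  fix x :: real assume "x \<in> {0..2}"
  then have "x \<in> (\<Union>q\<le>N. {threshold N q..threshold N (q + 1)})" using threshold_intervals_cover[of N] by blast
  then obtain q where q: "q \<le> N" "x \<in> {threshold N q..threshold N (q + 1)}" by blast
  then obtain \<theta> :: "real^'d" where x: "disp_band N \<theta> q = x"
    using range_disp_band[OF q(1), where 'd = 'd] by (metis imageE)
  define n where "n = q * CARD('d) + 1"
  have n: "n \<in> {1..CARD('d) * N + 1}" using q(1) by (simp add: n_def mult.commute)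
  have "(n - 1) mod CARD('d) = 0" "(n - 1) div CARD('d) = q" by (simp_all add: n_def)
  then have "\<not> degenerate_band ?A (fund_verts N) n" "band ?A (fund_verts N) n \<theta> = x"
    using degenerate_band_sub_adj_iff[OF N d n] band_sub_adj[OF N d n, of \<theta>] x by simp_all
  then show "x \<in> spec_ac ?A (fund_verts N)" unfolding spec_ac_def card_fund_verts using n by auto
qed

lemma spec_fb_sub_adj:
  assumes N: "N \<ge> 1" and d: "CARD('d::finite) \<ge> 2"
  shows "spec_fb (sub_adj N :: 'd sv \<Rightarrow> 'd sv \<Rightarrow> bool) (fund_verts N) = thresholds N"
proof (intro set_eqI iffI)
  let ?A = "sub_adj N :: 'd sv \<Rightarrow> 'd sv \<Rightarrow> bool"
  fix lam assume "lam \<in> spec_fb ?A (fund_verts N)"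
  then obtain n where n: "n \<in> {1..CARD('d) * N + 1}" "\<forall>\<theta>. band ?A (fund_verts N) n \<theta> = lam"
    unfolding spec_fb_def card_fund_verts by auto
  then have "degenerate_band ?A (fund_verts N) n" unfolding degenerate_band_def by blast
  then have "(n - 1) mod CARD('d) \<noteq> 0" using degenerate_band_sub_adj_iff[OF N d n(1)] by simp
  moreover from this have "(n - 1) div CARD('d) + 1 \<in> {1..N}" using band_index_bounds(2)[OF d n(1)] by simp
  ultimately show "lam \<in> thresholds N"
    using n(2) band_sub_adj[OF N d n(1), of 0] unfolding thresholds_def by auto
next
  let ?A = "sub_adj N :: 'd sv \<Rightarrow> 'd sv \<Rightarrow> bool"
  fix lam assume "lam \<in> thresholds N"
  then obtain j where j: "j \<in> {1..N}" "lam = threshold N j" unfolding thresholds_def by auto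
  define n where "n = (j - 1) * CARD('d) + 2"
  have "(j - 1) * CARD('d) + 2 \<le> (N - 1) * CARD('d) + CARD('d)"
    using j d by (intro add_mono mult_right_mono) auto
  also have "\<dots> = CARD('d) * N" using j by (cases N) (simp_all add: algebra_simps)
  finally have n_range: "n \<in> {1..CARD('d) * N + 1}" by (simp add: n_def)
  have "n - 1 = 1 + (j - 1) * CARD('d)" by (simp add: n_def)
  then have "(n - 1) mod CARD('d) = 1" "(n - 1) div CARD('d) = j - 1"
    using d by (simp_all only: mod_mult_self1 div_mult_self1) simp_all
  then have "\<forall>\<theta>. band ?A (fund_verts N) n \<theta> = lam" using band_sub_adj[OF N d n_range] j by simp
  then show "lam \<in> spec_fb ?A (fund_verts N)" unfolding spec_fb_def card_fund_verts using n_range by blast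
qed

lemma coord_hyperplane_null: "{\<theta>::real^'d::finite. \<theta> $ s = a} \<in> null_sets lborel"
proof -
  have eq: "{\<theta>::real^'d. \<theta> $ s = a} = {x. axis s 1 \<bullet> x = a}"
    by (auto simp: cart_eq_inner_axis inner_commute)
  have "negligible {x::real^'d. axis s 1 \<bullet> x = a}" by (rule negligible_hyperplane) simp
  then have "{x::real^'d. axis s 1 \<bullet> x = a} \<in> null_sets lebesgue" by (simp add: negligible_iff_null_sets)
  moreover have "{x::real^'d. axis s 1 \<bullet> x = a} \<in> sets lborel"
    using closed_hyperplane[of "axis s 1" a] by (simp add: borel_closed)
  ultimately show ?thesis unfolding eq using null_sets_completion_iff by blast
qed

text \<open>At mean_cos \<theta> = \<plusminus>1 every coordinate of \<theta> is a multiple of \<pi>, so this set lies in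
  countably many hyperplanes.\<close>

lemma mean_cos_extremal_null: "{\<theta>::real^'d::finite. mean_cos \<theta> = 1 \<or> mean_cos \<theta> = -1} \<in> null_sets lborel"
proof -
  obtain s :: 'd where True by blast
  let ?Z = "\<Union>k\<in>(UNIV::int set). {\<theta>::real^'d. \<theta> $ s = of_int k * pi}"
  have "?Z \<in> null_sets lborel" by (rule null_sets_UN') (auto intro: coord_hyperplane_null)
  moreover have "{\<theta>::real^'d. mean_cos \<theta> = 1 \<or> mean_cos \<theta> = -1} \<subseteq> ?Z"
  proof
    fix \<theta> :: "real^'d" assume "\<theta> \<in> {\<theta>. mean_cos \<theta> = 1 \<or> mean_cos \<theta> = -1}"
    then have "mean_cos \<theta> = 1 \<or> mean_cos \<theta> = -1" by simp
    then have "cis (\<theta> $ s) = complex_of_real (mean_cos \<theta>)"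
      using cos_eq_of_sum_cos_extremal[OF sum_cos_eq_mean_cos] cis_eq_of_cos_extremal by blast
    then have "sin (\<theta> $ s) = 0" by (simp add: complex_eq_iff)
    then obtain k :: int where "\<theta> $ s = of_int k * pi" by (auto simp: sin_zero_iff_int2)
    then show "\<theta> \<in> ?Z" by auto
  qed
  moreover have "{\<theta>::real^'d. mean_cos \<theta> = 1 \<or> mean_cos \<theta> = -1} \<in> sets lborel"
  proof -
    have "continuous_on UNIV (mean_cos :: real^'d \<Rightarrow> real)"
      unfolding mean_cos_def by (intro continuous_intros) auto
    then have "mean_cos \<in> borel_measurable (borel :: (real^'d) measure)" by (rule borel_measurable_continuous_onI)
    then show ?thesis by measurable
  qed
  ultimately show ?thesis using null_sets_subset by blast
qed

lemma eigmult_threshold_AE: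
  assumes N: "N \<ge> 1" and j: "j \<in> {1..N}"
  shows "AE \<theta> in lborel. eigmult (sub_adj N) (fund_verts N) (\<theta>::real^'d::finite) (threshold N j) = CARD('d) - 1"
proof (rule AE_I'[OF mean_cos_extremal_null], rule subsetI)
  fix \<theta> :: "real^'d"
  assume "\<theta> \<in> {\<theta> \<in> space lborel. eigmult (sub_adj N) (fund_verts N) \<theta> (threshold N j) \<noteq> CARD('d) - 1}"
  then have ne: "eigmult (sub_adj N) (fund_verts N) \<theta> (threshold N j) \<noteq> CARD('d) - 1" by simp
  define S where "S = {i\<in>{..N}. disp_band N \<theta> i = threshold N j}"
  have "mult_count N \<theta> (threshold N j) = card S + (CARD('d) - 1)"
    using j by (simp add: mult_count_def thresholds_def S_def)
  with ne have "S \<noteq> {}" by (auto simp: eigmult_eq_mult_count[OF N])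
  then obtain i where "i \<le> N" "disp_band N \<theta> i = threshold N j" by (auto simp: S_def)
  then have "mean_cos \<theta> = (-1) ^ j" using disp_band_eq_threshold[of i N j \<theta>] j by auto
  then show "\<theta> \<in> {\<theta>. mean_cos \<theta> = 1 \<or> mean_cos \<theta> = -1}" by (simp add: minus_one_power_iff)
qed

theorem proposition6p2:
  fixes N :: nat
  assumes "CARD('d::finite) \<ge> 2" and "N \<ge> 1"
  defines "A \<equiv> (sub_adj N :: 'd sv \<Rightarrow> 'd sv \<Rightarrow> bool)"
      and "Vs \<equiv> (fund_verts N :: ('d \<times> nat) option set)"
  shows "card Vs = CARD('d) * N + 1
     \<and> spec A Vs = spec_ac A Vs \<union> spec_fb A Vs
     \<and> spec_ac A Vs = {0..2}
     \<and> spec_fb A Vs = {1 + cos (pi * real n / real (N + 1)) | n. n \<in> {1..N}}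
     \<and> (\<forall>lam\<in>spec_fb A Vs. (AE \<theta> in lborel. eigmult A Vs \<theta> lam = CARD('d) - 1))
     \<and> spec_fb A Vs \<subseteq> spec_ac A Vs"
proof -
  have ac: "spec_ac A Vs = {0..2}" and fb: "spec_fb A Vs = thresholds N"
    unfolding A_def Vs_def using spec_ac_sub_adj spec_fb_sub_adj assms(1,2) by blast+
  have "thresholds N \<subseteq> {0..2}"
    unfolding thresholds_def using threshold_bounds[of _ N] by auto
  moreover have "\<forall>lam\<in>thresholds N. AE \<theta> in lborel. eigmult A Vs \<theta> lam = CARD('d) - 1"
    unfolding A_def Vs_def thresholds_def using eigmult_threshold_AE[OF assms(2)] by blast
  ultimately show ?thesis
    unfolding spec_eq_spec_ac_Un_spec_fb ac fb thresholds_eq_one_plus_cos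
    by (simp add: Vs_def card_fund_verts thresholds_def)
qed

end
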